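(* For every $j\in\{0,\dots,m-1\}$ and every $k\ge1$, $$\mathcal L_\Delta^{k}(h_j)=\Big(\int_{\Omega_{j+k \bmod m}}\mathcal L_\Delta^{k}(\mathbf 1)\,d\nu_{j+k \bmod m}\Big)\,h_{j+k \bmod m}.$$
   Context: Let $\mathcal V=\{1,\dots,\ell\}$ and let $A$ be an irreducible aperiodic $\{0,1\}$-matrix. Let $\Sigma_A^+=\{x\in\mathcal V^{\mathbb N}: A(x_{i-1},x_i)=1\ \forall i\ge1\}$ with the shift $T(x)_n=x_{n+1}$. Potential. Let $\phi$ be a real Hölder continuous function, normalised so that $\mathcal L_\phi\mathbf 1=\mathbf 1$, where $(\mathcal L_\phi\psi)(x)=\sum_{Ty=x}e^{\phi(y)}\psi(y)$. Subsystem. Let $\Delta\subsetneq\mathcal V$ with $\Sigma_\Delta=\{x: x_i\in\Delta\ \forall i\}$, such that the restriction of $A$ to $\Delta\times\Delta$ is irreducible with period $m\ge2$. Let $\Delta=\Delta_0\cup\dots\cup\Delta_{m-1}$ be the cyclic decomposition into disjoint sets such that $i\in\Delta_s$, $i'\in\Delta_{s'}$ and $A(i,i')=1$ imply $s'\equiv s+1\pmod m$. Indices are taken mod $m$. Define $\Omega_j=\{x\in\Sigma_\Delta: x_0\in\Delta_j\}$. Let $P_\Delta$ be the pressure of $\phi|_{\Sigma_\Delta}$ with respect to $T|_{\Sigma_\Delta}$. Operators. Define $\mathcal L_\Delta\psi=\mathcal L_\phi(\psi\chi_\Delta)$, where $\chi_\Delta$ is the indicator of $\{x_0\in\Delta\}$.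 Write $S_m\phi=\sum_{i=0}^{m-1}\phi\circ T^i$, and define $(\mathcal L^{(m)}_j\psi)(x)=\sum e^{S_m\phi(y)}\psi(y)$ over $y$ with $T^my=x$ and $y_s\in\Delta_{j+s}$ for $0\le s\le m-1$. Functions $h_j$. Let $h_j=\lim_n e^{-nmP_\Delta}(\mathcal L^{(m)}_j)^n\mathbf 1$ (a uniform limit on $\Sigma_A^+$). Measures $\nu_j$. Let $\nu_j$ be the unique Borel probability supported on $\Omega_j$ with $\int\mathcal L^{(m)}_j\psi\,d\nu_j=e^{mP_\Delta}\int\psi\,d\nu_j$ for all continuous $\psi$. *)

theory Defs
  imports "HOL-Analysis.Analysis" "HOL-Probability.Probability_Measure"
begin

text \<open>Points of the one-sided shift are sequences nat => nat (product topology, discrete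
  coordinates, from HOL-Analysis Function_Topology). The alphabet is a set S of natural
  numbers; the transition matrix A is a Boolean matrix (A i j = True iff A(i,j) = 1).\<close>

definition shift :: "(nat \<Rightarrow> nat) \<Rightarrow> (nat \<Rightarrow> nat)" where
  "shift x = (\<lambda>n. x (Suc n))"

definition Sigma_sub :: "nat set \<Rightarrow> (nat \<Rightarrow> nat \<Rightarrow> bool) \<Rightarrow> (nat \<Rightarrow> nat) set" where
  "Sigma_sub S A = {x. (\<forall>i. x i \<in> S) \<and> (\<forall>i. A (x i) (x (Suc i)))}"

definition adj :: "nat set \<Rightarrow> (nat \<Rightarrow> nat \<Rightarrow> bool) \<Rightarrow> (nat \<times> nat) set" where
  "adj S A = {(i, j). i \<in> S \<and> j \<in> S \<and> A i j}"

definition irreducible_on :: "nat set \<Rightarrow> (nat \<Rightarrow> nat \<Rightarrow> bool) \<Rightarrow> bool" where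
  "irreducible_on S A \<longleftrightarrow> (\<forall>i\<in>S. \<forall>j\<in>S. \<exists>n>0. (i, j) \<in> adj S A ^^ n)"

definition period :: "nat set \<Rightarrow> (nat \<Rightarrow> nat \<Rightarrow> bool) \<Rightarrow> nat \<Rightarrow> nat" where
  "period S A i = Gcd {n. n > 0 \<and> (i, i) \<in> adj S A ^^ n}"

definition cyclic_decomposition ::
  "nat set \<Rightarrow> (nat \<Rightarrow> nat \<Rightarrow> bool) \<Rightarrow> (nat \<Rightarrow> nat set) \<Rightarrow> nat \<Rightarrow> bool" where
  "cyclic_decomposition S A D m \<longleftrightarrow>
     (\<Union>s<m. D s) = S \<and>
     (\<forall>s<m. \<forall>s'<m. s \<noteq> s' \<longrightarrow> D s \<inter> D s' = {}) \<and>
     (\<forall>s<m. \<forall>s'<m. \<forall>i\<in>D s. \<forall>i'\<in>D s'. A i i' \<longrightarrow> s' = (s + 1) mod m)"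

definition dsym :: "(nat \<Rightarrow> nat) \<Rightarrow> (nat \<Rightarrow> nat) \<Rightarrow> real" where
  "dsym x y = (if x = y then 0 else (1/2) ^ (LEAST n. x n \<noteq> y n))"

definition holder_on :: "(nat \<Rightarrow> nat) set \<Rightarrow> ((nat \<Rightarrow> nat) \<Rightarrow> real) \<Rightarrow> bool" where
  "holder_on X f \<longleftrightarrow> (\<exists>C \<alpha>. \<alpha> > 0 \<and> (\<forall>x\<in>X. \<forall>y\<in>X. \<bar>f x - f y\<bar> \<le> C * dsym x y powr \<alpha>))"

definition birkhoff :: "nat \<Rightarrow> ((nat \<Rightarrow> nat) \<Rightarrow> real) \<Rightarrow> (nat \<Rightarrow> nat) \<Rightarrow> real" where
  "birkhoff n \<phi> x = (\<Sum>i<n. \<phi> ((shift ^^ i) x))"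

definition pressure :: "nat set \<Rightarrow> (nat \<Rightarrow> nat \<Rightarrow> bool) \<Rightarrow> ((nat \<Rightarrow> nat) \<Rightarrow> real) \<Rightarrow> real" where
  "pressure S A \<phi> = lim (\<lambda>n. ln (\<Sum>w\<in>(\<lambda>x. map x [0..<n]) ` Sigma_sub S A.
       (SUP x\<in>{x \<in> Sigma_sub S A. map x [0..<n] = w}. exp (birkhoff n \<phi> x))) / real n)"

definition transfer :: "nat set \<Rightarrow> (nat \<Rightarrow> nat \<Rightarrow> bool) \<Rightarrow> ((nat \<Rightarrow> nat) \<Rightarrow> real)
    \<Rightarrow> ((nat \<Rightarrow> nat) \<Rightarrow> real) \<Rightarrow> (nat \<Rightarrow> nat) \<Rightarrow> real" where
  "transfer S A \<phi> \<psi> x = (\<Sum>y\<in>{y \<in> Sigma_sub S A. shift y = x}. exp (\<phi> y) * \<psi> y)"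

definition transfer_Delta :: "nat set \<Rightarrow> (nat \<Rightarrow> nat \<Rightarrow> bool) \<Rightarrow> nat set \<Rightarrow> ((nat \<Rightarrow> nat) \<Rightarrow> real)
    \<Rightarrow> ((nat \<Rightarrow> nat) \<Rightarrow> real) \<Rightarrow> (nat \<Rightarrow> nat) \<Rightarrow> real" where
  "transfer_Delta S A \<Delta> \<phi> \<psi> = transfer S A \<phi> (\<lambda>y. \<psi> y * (if y 0 \<in> \<Delta> then 1 else 0))"

definition transfer_m :: "nat set \<Rightarrow> (nat \<Rightarrow> nat \<Rightarrow> bool) \<Rightarrow> (nat \<Rightarrow> nat set) \<Rightarrow> nat \<Rightarrow> nat
    \<Rightarrow> ((nat \<Rightarrow> nat) \<Rightarrow> real) \<Rightarrow> ((nat \<Rightarrow> nat) \<Rightarrow> real) \<Rightarrow> (nat \<Rightarrow> nat) \<Rightarrow> real" where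
  "transfer_m S A D m j \<phi> \<psi> x =
     (\<Sum>y\<in>{y \<in> Sigma_sub S A. (shift ^^ m) y = x \<and> (\<forall>s<m. y s \<in> D ((j + s) mod m))}.
        exp (birkhoff m \<phi> y) * \<psi> y)"

definition Omega :: "nat set \<Rightarrow> (nat \<Rightarrow> nat \<Rightarrow> bool) \<Rightarrow> (nat \<Rightarrow> nat set) \<Rightarrow> nat \<Rightarrow> (nat \<Rightarrow> nat) set" where
  "Omega \<Delta> A D j = {x \<in> Sigma_sub \<Delta> A. x 0 \<in> D j}"

end

theory Submission
  imports Defs
begin

text \<open>
  Notation: X is the full subshift, L the normalised transfer operator, L_Delta = L(. chi_Delta),
  L_t = L(. chi_D(t mod m)) the part of L entering the phase t of the cyclic decomposition,
  L^(m)_j = L_(j+m-1) ... L_j the operator of the statement, and lambda = exp(m P).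
  The proof rests on three observations.

  (1) L_Delta maps functions living on phase t to functions living on phase t+1, so
  L_Delta^k ((L^(m)_j)^n 1) = (L^(m)_i)^n g  with  i = (j+k) mod m  and  g = L_(j+k-1) ... L_j 1.
  Hence L_Delta^k h_j is the uniform limit of lambda^-n (L^(m)_i)^n g.
  (2) Any such limit U is a continuous eigenfunction of L^(m)_i for lambda, and the
  conformality of nu_i gives  int U dnu_i = int g dnu_i.
  (3) Continuous eigenfunctions for lambda are multiples of h_i.  A non-negative eigenfunction
  whose infimum on Omega_i is zero vanishes on Omega_i, because irreducibility of Delta lets
  every cylinder of Omega_i be reached in a bounded number of blocks; an eigenfunction vanishing
  on Omega_i vanishes on X, because long cyclic preimage paths shadow points of Omega_i; and
  t h_i - U with t = sup (U / h_i) on Omega_i is a function of the first kind.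
  Finally g and L_Delta^k 1 agree on Omega_i, which carries nu_i, so the constant is
  int L_Delta^k 1 dnu_i.
\<close>


lemma exp_abs_diff_le:
  assumes "(a :: real) \<le> B" "b \<le> B"
  shows "\<bar>exp a - exp b\<bar> \<le> exp B * \<bar>a - b\<bar>"
proof -
  have key: "exp y - exp x \<le> exp B * (y - x)" if "x \<le> y" "y \<le> B" for x y :: real
  proof -
    have "exp y * (1 + (x - y)) \<le> exp y * exp (x - y)"
      by (intro mult_left_mono exp_ge_add_one_self) auto
    then have "exp y - exp x \<le> exp y * (y - x)" by (simp add: exp_diff algebra_simps)
    also have "\<dots> \<le> exp B * (y - x)" using that by (intro mult_right_mono) auto
    finally show ?thesis .
  qed
  show ?thesis using key[of a b] key[of b a] assms by (cases "a \<le> b") (auto simp: abs_if)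
qed

lemma sup_of_ratios:
  fixes u h :: "'a \<Rightarrow> real"
  assumes ne: "S \<noteq> {}" and \<delta>: "0 < \<delta>" and h\<delta>: "\<And>y. y \<in> S \<Longrightarrow> \<delta> \<le> h y"
    and hB: "\<And>y. y \<in> S \<Longrightarrow> h y \<le> Bh" and uB: "\<And>y. y \<in> S \<Longrightarrow> \<bar>u y\<bar> \<le> Bu"
  obtains t where "\<And>y. y \<in> S \<Longrightarrow> u y \<le> t * h y" "\<And>e. 0 < e \<Longrightarrow> \<exists>y\<in>S. t * h y - u y < e"
proof -
  define R where "R = (\<lambda>y. u y / h y) ` S"
  have Rne: "R \<noteq> {}" using ne by (simp add: R_def)
  have hpos: "0 < h y" if "y \<in> S" for y using h\<delta>[OF that] \<delta> by linarith
  have "r \<le> Bu / \<delta>" if "r \<in> R" for r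
  proof -
    obtain y where y: "y \<in> S" "r = u y / h y" using \<open>r \<in> R\<close> by (auto simp: R_def)
    have "r \<le> \<bar>u y\<bar> / h y" using y hpos[OF y(1)] by (simp add: divide_right_mono)
    also have "\<dots> \<le> Bu / \<delta>"
      using uB[OF y(1)] h\<delta>[OF y(1)] \<delta> by (intro frac_le) auto
    finally show ?thesis .
  qed
  then have bdd: "bdd_above R" by (meson bdd_above.I)
  have Bh: "0 < Bh" using ne h\<delta> hB \<delta> by (meson all_not_in_conv less_le_trans)
  show ?thesis
  proof (rule that[of "Sup R"])
    fix y assume y: "y \<in> S"
    then have "u y / h y \<le> Sup R" using bdd by (intro cSup_upper) (auto simp: R_def)
    then show "u y \<le> Sup R * h y" using hpos[OF y] by (simp add: divide_le_eq)
  next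
    fix e :: real assume e: "0 < e"
    obtain y where y: "y \<in> S" and ty: "Sup R - e / Bh < u y / h y"
      using less_cSup_iff[OF Rne bdd, of "Sup R - e / Bh"] e Bh by (auto simp: R_def)
    have "Sup R * h y - u y = h y * (Sup R - u y / h y)" using hpos[OF y] by (simp add: field_simps)
    also have "\<dots> < h y * (e / Bh)" using ty hpos[OF y] by (intro mult_strict_left_mono) auto
    also have "\<dots> \<le> e" using hB[OF y] hpos[OF y] e Bh by (simp add: field_simps mult_left_mono)
    finally show "\<exists>y\<in>S. Sup R * h y - u y < e" using y by blast
  qed
qed

lemma integral_uniform_limit:
  fixes F :: "nat \<Rightarrow> 'a \<Rightarrow> real"
  assumes M: "prob_space M" and F: "\<And>n. integrable M (F n)" and U: "integrable M U"
    and lim: "uniform_limit (space M) F U sequentially"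
  shows "(\<lambda>n. \<integral>x. F n x \<partial>M) \<longlonglongrightarrow> (\<integral>x. U x \<partial>M)"
proof (rule LIMSEQ_I)
  interpret prob_space M by (rule M)
  fix r :: real assume r: "0 < r"
  obtain N where N: "\<forall>n\<ge>N. \<forall>x\<in>space M. dist (F n x) (U x) < r / 2"
    using lim r unfolding uniform_limit_sequentially_iff by (meson half_gt_zero)
  have "norm ((\<integral>x. F n x \<partial>M) - (\<integral>x. U x \<partial>M)) < r" if n: "N \<le> n" for n
  proof -
    have "norm ((\<integral>x. F n x \<partial>M) - (\<integral>x. U x \<partial>M)) = norm (\<integral>x. F n x - U x \<partial>M)"
      using F U by simp
    also have "\<dots> \<le> (\<integral>x. norm (F n x - U x) \<partial>M)" by (rule integral_norm_bound)
    also have "\<dots> \<le> (\<integral>x. r / 2 \<partial>M)"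
      using N n F U by (intro integral_mono) (auto simp: dist_real_def less_imp_le)
    also have "\<dots> = r / 2" by (simp add: prob_space)
    finally show ?thesis using r by simp
  qed
  then show "\<exists>no. \<forall>n\<ge>no. norm ((\<integral>x. F n x \<partial>M) - (\<integral>x. U x \<partial>M)) < r" by blast
qed


section \<open>Sequences and subshifts of finite type\<close>

definition prepend :: "nat \<Rightarrow> (nat \<Rightarrow> nat) \<Rightarrow> nat \<Rightarrow> nat" where
  "prepend a x = case_nat a x"

lemma prepend_simps [simp]:
  "prepend a x 0 = a" "prepend a x (Suc n) = x n" "shift (prepend a x) = x"
  by (simp_all add: prepend_def shift_def)

lemma prepend_shift: "prepend (y 0) (shift y) = y"
proof
  fix n show "prepend (y 0) (shift y) n = y n" by (cases n) (auto simp: shift_def)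
qed

lemma funpow_shift: "(shift ^^ n) y t = y (t + n)"
  by (induction n arbitrary: t) (auto simp: shift_def)

lemma funpow_shift_Suc: "(shift ^^ Suc l) y = (shift ^^ l) (shift y)"
  by (simp only: funpow_Suc_right comp_def)

definition splice :: "(nat \<Rightarrow> nat) \<Rightarrow> nat \<Rightarrow> (nat \<Rightarrow> nat) \<Rightarrow> nat \<Rightarrow> nat" where
  "splice w l x t = (if t < l then w t else x (t - l))"

lemma funpow_shift_splice: "(shift ^^ l) (splice w l x) = x"
  by (simp add: fun_eq_iff funpow_shift splice_def)

lemma shift_Sigma_sub: "y \<in> Sigma_sub S A \<Longrightarrow> shift y \<in> Sigma_sub S A"
  by (auto simp: Sigma_sub_def shift_def)

lemma funpow_shift_Sigma_sub: "y \<in> Sigma_sub S A \<Longrightarrow> (shift ^^ k) y \<in> Sigma_sub S A"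
  by (induction k) (auto intro: shift_Sigma_sub)

lemma Sigma_sub_mono: "S \<subseteq> S' \<Longrightarrow> Sigma_sub S A \<subseteq> Sigma_sub S' A"
  by (auto simp: Sigma_sub_def)

lemma prepend_Sigma_sub:
  assumes "x \<in> Sigma_sub S A" "a \<in> S" "A a (x 0)"
  shows "prepend a x \<in> Sigma_sub S A"
  unfolding Sigma_sub_def
proof (intro CollectI conjI allI)
  fix i
  show "prepend a x i \<in> S" using assms by (cases i) (auto simp: Sigma_sub_def)
  show "A (prepend a x i) (prepend a x (Suc i))" using assms by (cases i) (auto simp: Sigma_sub_def)
qed

lemma splice_Sigma_sub:
  assumes w: "\<forall>s<l. w s \<in> S \<and> A (w s) (w (Suc s))" and wl: "w l = x 0"
    and x: "x \<in> Sigma_sub S A"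
  shows "splice w l x \<in> Sigma_sub S A"
  unfolding Sigma_sub_def
proof (intro CollectI conjI allI)
  fix t
  show "splice w l x t \<in> S" using w x by (auto simp: splice_def Sigma_sub_def)
  show "A (splice w l x t) (splice w l x (Suc t))"
  proof (cases "Suc t < l")
    case False
    then have "t = l - 1 \<and> l > 0 \<or> t \<ge> l" by linarith
    then show ?thesis
      using w wl x by (auto simp: splice_def Sigma_sub_def Suc_diff_le)
  qed (use w in \<open>simp add: splice_def\<close>)
qed

lemma preimages_Sigma_sub:
  assumes x: "x \<in> Sigma_sub S A"
  shows "{y \<in> Sigma_sub S A. shift y = x} = (\<lambda>a. prepend a x) ` {a \<in> S. A a (x 0)}"
proof (intro equalityI subsetI)
  fix y assume y: "y \<in> {y \<in> Sigma_sub S A. shift y = x}"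
  then have "y = prepend (y 0) x" using prepend_shift[of y] by simp
  moreover have "y 0 \<in> {a \<in> S. A a (x 0)}" using y by (auto simp: Sigma_sub_def shift_def)
  ultimately show "y \<in> (\<lambda>a. prepend a x) ` {a \<in> S. A a (x 0)}" by blast
qed (use prepend_Sigma_sub x in auto)

lemma preimages_outside: "x \<notin> Sigma_sub S A \<Longrightarrow> {y \<in> Sigma_sub S A. shift y = x} = {}"
  using shift_Sigma_sub by blast

lemma finite_preimages:
  assumes "finite S"
  shows "finite {y \<in> Sigma_sub S A. (shift ^^ l) y = x}"
proof (induction l arbitrary: x)
  case (Suc l)
  have "{y \<in> Sigma_sub S A. (shift ^^ Suc l) y = x} \<subseteq>
        (\<Union>z\<in>{z \<in> Sigma_sub S A. (shift ^^ l) z = x}. {y \<in> Sigma_sub S A. shift y = z})"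
    by (auto simp: funpow_shift_Suc simp del: funpow.simps intro: shift_Sigma_sub)
  moreover have "finite {y \<in> Sigma_sub S A. shift y = z}" for z
  proof (cases "z \<in> Sigma_sub S A")
    case True then show ?thesis using assms by (subst preimages_Sigma_sub) auto
  qed (subst preimages_outside, auto)
  ultimately show ?case using Suc.IH by (meson finite_UN_I finite_subset)
qed simp

lemma transfer_prepend:
  "x \<in> Sigma_sub S A \<Longrightarrow>
     transfer S A \<phi> f x = (\<Sum>a\<in>{a \<in> S. A a (x 0)}. exp (\<phi> (prepend a x)) * f (prepend a x))"
  unfolding transfer_def preimages_Sigma_sub
  by (subst sum.reindex) (auto intro!: inj_onI dest: arg_cong[where f = "\<lambda>y. y 0"])

lemma transfer_outside: "x \<notin> Sigma_sub S A \<Longrightarrow> transfer S A \<phi> f x = 0"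
  unfolding transfer_def preimages_outside by simp

lemma birkhoff_Suc: "birkhoff (Suc l) \<phi> y = \<phi> y + birkhoff l \<phi> (shift y)"
  unfolding birkhoff_def sum.lessThan_Suc_shift by (simp only: funpow_shift_Suc funpow_0)


section \<open>Bounded cylinder-uniformly continuous functions\<close>

text \<open>A function on a set \<open>X\<close> of sequences is cylinder-uniformly continuous if points agreeing
  on a long enough initial word have close values (uniform continuity for the usual metric of the
  shift space).\<close>

definition ucb_on :: "(nat \<Rightarrow> nat) set \<Rightarrow> ((nat \<Rightarrow> nat) \<Rightarrow> real) \<Rightarrow> bool" where
  "ucb_on X f \<longleftrightarrow>
     (\<forall>e>0. \<exists>N. \<forall>x\<in>X. \<forall>y\<in>X. (\<forall>t<N. x t = y t) \<longrightarrow> \<bar>f x - f y\<bar> \<le> e) \<and>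
     (\<exists>B. \<forall>x\<in>X. \<bar>f x\<bar> \<le> B)"

lemma ucb_onI:
  assumes "\<And>e. e > 0 \<Longrightarrow> \<exists>N. \<forall>x\<in>X. \<forall>y\<in>X. (\<forall>t<N. x t = y t) \<longrightarrow> \<bar>f x - f y\<bar> \<le> e"
    and "\<And>x. x \<in> X \<Longrightarrow> \<bar>f x\<bar> \<le> B"
  shows "ucb_on X f"
  using assms unfolding ucb_on_def by blast

lemma ucb_on_cylinder:
  assumes "ucb_on X f" "e > 0"
  obtains N where "\<And>x y. x \<in> X \<Longrightarrow> y \<in> X \<Longrightarrow> \<forall>t<N. x t = y t \<Longrightarrow> \<bar>f x - f y\<bar> \<le> e"
proof -
  from assms obtain N where "\<forall>x\<in>X. \<forall>y\<in>X. (\<forall>t<N. x t = y t) \<longrightarrow> \<bar>f x - f y\<bar> \<le> e"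
    unfolding ucb_on_def by auto
  then show ?thesis by (intro that) auto
qed

lemma ucb_on_bound:
  assumes "ucb_on X f"
  obtains B where "0 \<le> B" "\<And>x. x \<in> X \<Longrightarrow> \<bar>f x\<bar> \<le> B"
proof -
  from assms obtain B where "\<forall>x\<in>X. \<bar>f x\<bar> \<le> B" unfolding ucb_on_def by blast
  then show ?thesis by (intro that[of "max B 0"]) auto
qed

lemma ucb_on_const: "ucb_on X (\<lambda>_. c)"
  by (rule ucb_onI[where B = "\<bar>c\<bar>"]) auto

lemma ucb_on_add:
  assumes f: "ucb_on X f" and g: "ucb_on X g"
  shows "ucb_on X (\<lambda>y. f y + g y)"
proof -
  obtain Bf where Bf: "\<And>x. x \<in> X \<Longrightarrow> \<bar>f x\<bar> \<le> Bf" using ucb_on_bound[OF f] by blast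
  obtain Bg where Bg: "\<And>x. x \<in> X \<Longrightarrow> \<bar>g x\<bar> \<le> Bg" using ucb_on_bound[OF g] by blast
  show ?thesis
  proof (rule ucb_onI[where B = "Bf + Bg"])
    fix e :: real assume "e > 0"
    then have e2: "e / 2 > 0" by simp
    obtain N1 where
      N1: "\<And>x y. x \<in> X \<Longrightarrow> y \<in> X \<Longrightarrow> \<forall>t<N1. x t = y t \<Longrightarrow> \<bar>f x - f y\<bar> \<le> e / 2"
      using ucb_on_cylinder[OF f e2] by blast
    obtain N2 where
      N2: "\<And>x y. x \<in> X \<Longrightarrow> y \<in> X \<Longrightarrow> \<forall>t<N2. x t = y t \<Longrightarrow> \<bar>g x - g y\<bar> \<le> e / 2"
      using ucb_on_cylinder[OF g e2] by blast
    show "\<exists>N. \<forall>x\<in>X. \<forall>y\<in>X. (\<forall>t<N. x t = y t) \<longrightarrow> \<bar>f x + g x - (f y + g y)\<bar> \<le> e"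
    proof (intro exI[of _ "max N1 N2"] ballI impI)
      fix x y assume "x \<in> X" "y \<in> X" "\<forall>t<max N1 N2. x t = y t"
      then have "\<bar>f x - f y\<bar> \<le> e / 2" "\<bar>g x - g y\<bar> \<le> e / 2" using N1 N2 by auto
      then show "\<bar>f x + g x - (f y + g y)\<bar> \<le> e" by linarith
    qed
  next
    fix x assume "x \<in> X"
    then show "\<bar>f x + g x\<bar> \<le> Bf + Bg"
      using Bf[of x] Bg[of x] abs_triangle_ineq[of "f x" "g x"] by linarith
  qed
qed

lemma ucb_on_mult:
  assumes f: "ucb_on X f" and g: "ucb_on X g"
  shows "ucb_on X (\<lambda>y. f y * g y)"
proof -
  obtain Bf where Bf0: "Bf \<ge> 0" and Bf: "\<And>x. x \<in> X \<Longrightarrow> \<bar>f x\<bar> \<le> Bf"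
    using ucb_on_bound[OF f] by blast
  obtain Bg where Bg0: "Bg \<ge> 0" and Bg: "\<And>x. x \<in> X \<Longrightarrow> \<bar>g x\<bar> \<le> Bg"
    using ucb_on_bound[OF g] by blast
  show ?thesis
  proof (rule ucb_onI[where B = "Bf * Bg"])
    fix e :: real assume e: "e > 0"
    define d where "d = e / (Bf + Bg + 1)"
    have d: "d > 0" "(Bf + Bg) * d \<le> e"
      using e Bf0 Bg0 by (auto simp: d_def field_simps)
    obtain N1 where
      N1: "\<And>x y. x \<in> X \<Longrightarrow> y \<in> X \<Longrightarrow> \<forall>t<N1. x t = y t \<Longrightarrow> \<bar>f x - f y\<bar> \<le> d"
      using ucb_on_cylinder[OF f d(1)] by blast
    obtain N2 where
      N2: "\<And>x y. x \<in> X \<Longrightarrow> y \<in> X \<Longrightarrow> \<forall>t<N2. x t = y t \<Longrightarrow> \<bar>g x - g y\<bar> \<le> d"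
      using ucb_on_cylinder[OF g d(1)] by blast
    show "\<exists>N. \<forall>x\<in>X. \<forall>y\<in>X. (\<forall>t<N. x t = y t) \<longrightarrow> \<bar>f x * g x - f y * g y\<bar> \<le> e"
    proof (intro exI[of _ "max N1 N2"] ballI impI)
      fix x y assume xy: "x \<in> X" "y \<in> X" "\<forall>t<max N1 N2. x t = y t"
      have "\<bar>f x * g x - f y * g y\<bar> = \<bar>f x * (g x - g y) + g y * (f x - f y)\<bar>"
        by (simp add: algebra_simps)
      also have "\<dots> \<le> \<bar>f x\<bar> * \<bar>g x - g y\<bar> + \<bar>g y\<bar> * \<bar>f x - f y\<bar>"
        by (metis abs_mult abs_triangle_ineq)
      also have "\<dots> \<le> Bf * d + Bg * d"
        using N1 N2 xy Bf Bg Bf0 Bg0 by (intro add_mono mult_mono) auto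
      finally show "\<bar>f x * g x - f y * g y\<bar> \<le> e" using d(2) by (simp add: algebra_simps)
    qed
  next
    fix x assume "x \<in> X"
    then show "\<bar>f x * g x\<bar> \<le> Bf * Bg" using Bf Bg Bf0 by (simp add: abs_mult mult_mono)
  qed
qed

lemma ucb_on_lin:
  assumes "ucb_on X f" "ucb_on X g"
  shows "ucb_on X (\<lambda>y. a * f y + b * g y)"
  using assms by (intro ucb_on_add ucb_on_mult ucb_on_const)

lemma ucb_on_exp:
  assumes f: "ucb_on X f"
  shows "ucb_on X (\<lambda>y. exp (f y))"
proof -
  obtain B where B: "\<And>x. x \<in> X \<Longrightarrow> \<bar>f x\<bar> \<le> B" using ucb_on_bound[OF f] by blast
  then have fB: "\<And>x. x \<in> X \<Longrightarrow> f x \<le> B" by (simp add: abs_le_iff)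
  show ?thesis
  proof (rule ucb_onI[where B = "exp B"])
    fix e :: real assume e: "e > 0"
    obtain N where N: "\<And>x y. x \<in> X \<Longrightarrow> y \<in> X \<Longrightarrow> \<forall>t<N. x t = y t \<Longrightarrow> \<bar>f x - f y\<bar> \<le> e / exp B"
      using ucb_on_cylinder[OF f, of "e / exp B"] e by auto
    show "\<exists>N. \<forall>x\<in>X. \<forall>y\<in>X. (\<forall>t<N. x t = y t) \<longrightarrow> \<bar>exp (f x) - exp (f y)\<bar> \<le> e"
    proof (intro exI[of _ N] ballI impI)
      fix x y assume xy: "x \<in> X" "y \<in> X" "\<forall>t<N. x t = y t"
      have "\<bar>exp (f x) - exp (f y)\<bar> \<le> exp B * \<bar>f x - f y\<bar>"
        using fB xy by (intro exp_abs_diff_le) auto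
      also have "\<dots> \<le> exp B * (e / exp B)" using N xy by (intro mult_left_mono) auto
      finally show "\<bar>exp (f x) - exp (f y)\<bar> \<le> e" by simp
    qed
  qed (use fB in auto)
qed

text \<open>Cylinder-uniform continuity implies continuity for the product topology, which is the
  hypothesis under which the conformality of the measures is available.\<close>

lemma ucb_on_continuous_on:
  assumes "ucb_on X f"
  shows "continuous_on X f"
  unfolding continuous_on_topological
proof (intro ballI allI impI)
  fix x B assume x: "x \<in> X" and B: "open B" "f x \<in> B"
  obtain e where e: "e > 0" "ball (f x) e \<subseteq> B" using B open_contains_ball by blast
  obtain N where N: "\<And>x y. x \<in> X \<Longrightarrow> y \<in> X \<Longrightarrow> \<forall>t<N. x t = y t \<Longrightarrow> \<bar>f x - f y\<bar> \<le> e / 2"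
    using ucb_on_cylinder[OF assms, of "e / 2"] e by auto
  define U where "U = (\<Inter>t\<in>{..<N}. (\<lambda>y. y t) -` {x t})"
  have "open U" unfolding U_def
    by (intro open_INT ballI open_vimage continuous_on_product_coordinates) (auto simp: open_discrete)
  moreover have "\<forall>y\<in>X. y \<in> U \<longrightarrow> f y \<in> B"
  proof (intro ballI impI)
    fix y assume "y \<in> X" "y \<in> U"
    then have "\<bar>f x - f y\<bar> \<le> e / 2" using N x unfolding U_def by auto
    then show "f y \<in> B" using e by (auto simp: dist_real_def)
  qed
  ultimately show "\<exists>A. open A \<and> x \<in> A \<and> (\<forall>y\<in>X. y \<in> A \<longrightarrow> f y \<in> B)"
    unfolding U_def by blast
qed

text \<open>The class is closed under uniform limits (an \<open>\<epsilon>/3\<close> argument); the functions \<open>h\<^sub>j\<close>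
  belong to it for this reason.\<close>

lemma ucb_on_uniform_limit:
  assumes F: "\<And>n. ucb_on X (F n)" and U: "uniform_limit X F U sequentially"
  shows "ucb_on X U"
proof -
  have close: "\<exists>n. \<forall>x\<in>X. \<bar>F n x - U x\<bar> < e" if e: "e > 0" for e
  proof -
    obtain N where "\<forall>n\<ge>N. \<forall>x\<in>X. dist (F n x) (U x) < e"
      using U e unfolding uniform_limit_sequentially_iff by blast
    then show ?thesis unfolding dist_real_def by blast
  qed
  obtain n where n: "\<forall>x\<in>X. \<bar>F n x - U x\<bar> < 1" using close[of 1] by auto
  obtain B where B: "\<And>x. x \<in> X \<Longrightarrow> \<bar>F n x\<bar> \<le> B" using ucb_on_bound[OF F] by blast
  show ?thesis
  proof (rule ucb_onI[where B = "B + 1"])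
    fix e :: real assume e: "e > 0"
    then obtain n where n: "\<forall>x\<in>X. \<bar>F n x - U x\<bar> < e / 3" using close[of "e / 3"] by auto
    obtain N where N: "\<And>x y. x \<in> X \<Longrightarrow> y \<in> X \<Longrightarrow> \<forall>t<N. x t = y t \<Longrightarrow> \<bar>F n x - F n y\<bar> \<le> e / 3"
      using ucb_on_cylinder[OF F, of "e / 3"] e by auto
    show "\<exists>N. \<forall>x\<in>X. \<forall>y\<in>X. (\<forall>t<N. x t = y t) \<longrightarrow> \<bar>U x - U y\<bar> \<le> e"
    proof (intro exI[of _ N] ballI impI)
      fix x y assume xy: "x \<in> X" "y \<in> X" "\<forall>t<N. x t = y t"
      then have "\<bar>F n x - F n y\<bar> \<le> e / 3" "\<bar>F n x - U x\<bar> < e / 3" "\<bar>F n y - U y\<bar> < e / 3"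
        using N n by auto
      then show "\<bar>U x - U y\<bar> \<le> e" by linarith
    qed
  next
    fix x assume "x \<in> X" then show "\<bar>U x\<bar> \<le> B + 1" using n B[of x] by fastforce
  qed
qed

lemma dsym_le_cylinder:
  assumes "\<forall>t<N. x t = y t"
  shows "dsym x y \<le> (1/2) ^ N"
proof (cases "x = y")
  case False
  then obtain n where "x n \<noteq> y n" by auto
  then have "x (LEAST n. x n \<noteq> y n) \<noteq> y (LEAST n. x n \<noteq> y n)" by (rule LeastI)
  then have "N \<le> (LEAST n. x n \<noteq> y n)" using assms by (meson not_le)
  then show ?thesis using False by (simp add: dsym_def power_decreasing)
qed (simp add: dsym_def)

lemma holder_on_ucb_on:
  assumes "holder_on X \<phi>"
  shows "ucb_on X \<phi>"
proof -
  obtain C \<alpha> where \<alpha>: "\<alpha> > 0" and H: "\<forall>x\<in>X. \<forall>y\<in>X. \<bar>\<phi> x - \<phi> y\<bar> \<le> C * dsym x y powr \<alpha>"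
    using assms unfolding holder_on_def by blast
  define r where "r = (1/2 :: real) powr \<alpha>"
  have r: "0 \<le> r" "r < 1" using powr_less_mono2[OF \<alpha>, of "1/2" 1] by (auto simp: r_def)
  have cyl: "\<bar>\<phi> x - \<phi> y\<bar> \<le> max C 0 * r ^ N" if "x \<in> X" "y \<in> X" "\<forall>t<N. x t = y t" for x y N
  proof -
    have "dsym x y powr \<alpha> \<le> ((1/2) ^ N) powr \<alpha>"
      using dsym_le_cylinder[OF that(3)] \<alpha> by (intro powr_mono2) (auto simp: dsym_def)
    also have "\<dots> = r ^ N" by (simp add: r_def powr_realpow[symmetric] powr_powr mult.commute)
    finally have "max C 0 * dsym x y powr \<alpha> \<le> max C 0 * r ^ N" by (simp add: mult_left_mono)
    moreover have "C * dsym x y powr \<alpha> \<le> max C 0 * dsym x y powr \<alpha>" by (simp add: mult_right_mono)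
    ultimately have "C * dsym x y powr \<alpha> \<le> max C 0 * r ^ N" by linarith
    then show ?thesis using H that by fastforce
  qed
  show ?thesis
  proof (cases "X = {}")
    case False
    then obtain x0 where x0: "x0 \<in> X" by blast
    show ?thesis
    proof (rule ucb_onI[where B = "\<bar>\<phi> x0\<bar> + max C 0"])
      fix e :: real assume "e > 0"
      moreover have "(\<lambda>N. max C 0 * r ^ N) \<longlonglongrightarrow> max C 0 * 0"
        using r by (intro tendsto_mult tendsto_const LIMSEQ_power_zero) auto
      ultimately have "\<forall>\<^sub>F N in sequentially. max C 0 * r ^ N < e"
        by (simp add: order_tendstoD(2))
      then obtain N where "max C 0 * r ^ N < e" by (auto simp: eventually_sequentially)
      then show "\<exists>N. \<forall>x\<in>X. \<forall>y\<in>X. (\<forall>t<N. x t = y t) \<longrightarrow> \<bar>\<phi> x - \<phi> y\<bar> \<le> e"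
        using cyl by (meson less_imp_le order_trans)
    next
      fix x assume "x \<in> X" then show "\<bar>\<phi> x\<bar> \<le> \<bar>\<phi> x0\<bar> + max C 0"
        using cyl[of x x0 0] x0 by simp
    qed
  qed (simp add: ucb_on_def)
qed


section \<open>Positive contractions\<close>

definition positive_contraction ::
  "(nat \<Rightarrow> nat) set \<Rightarrow> (((nat \<Rightarrow> nat) \<Rightarrow> real) \<Rightarrow> (nat \<Rightarrow> nat) \<Rightarrow> real) \<Rightarrow> bool" where
  "positive_contraction X T \<longleftrightarrow>
    (\<forall>f g a b. \<forall>x\<in>X. T (\<lambda>y. a * f y + b * g y) x = a * T f x + b * T g x) \<and>
    (\<forall>f g. (\<forall>y\<in>X. f y = g y) \<longrightarrow> (\<forall>x\<in>X. T f x = T g x)) \<and>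
    (\<forall>f B. 0 \<le> B \<longrightarrow> (\<forall>y\<in>X. \<bar>f y\<bar> \<le> B) \<longrightarrow> (\<forall>x\<in>X. \<bar>T f x\<bar> \<le> B)) \<and>
    (\<forall>f. (\<forall>y\<in>X. 0 \<le> f y) \<longrightarrow> (\<forall>x\<in>X. 0 \<le> T f x)) \<and>
    (\<forall>f. ucb_on X f \<longrightarrow> ucb_on X (T f))"

context
  fixes X T assumes T: "positive_contraction X T"
begin

lemma pc_linear: "x \<in> X \<Longrightarrow> T (\<lambda>y. a * f y + b * g y) x = a * T f x + b * T g x"
  and pc_local: "(\<And>y. y \<in> X \<Longrightarrow> f y = g y) \<Longrightarrow> x \<in> X \<Longrightarrow> T f x = T g x"
  and pc_bound: "0 \<le> B \<Longrightarrow> (\<And>y. y \<in> X \<Longrightarrow> \<bar>f y\<bar> \<le> B) \<Longrightarrow> x \<in> X \<Longrightarrow> \<bar>T f x\<bar> \<le> B"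
  and pc_nonneg: "(\<And>y. y \<in> X \<Longrightarrow> 0 \<le> f y) \<Longrightarrow> x \<in> X \<Longrightarrow> 0 \<le> T f x"
  and pc_ucb_on: "ucb_on X f \<Longrightarrow> ucb_on X (T f)"
  using T unfolding positive_contraction_def by blast+

lemma pc_scale: "x \<in> X \<Longrightarrow> T (\<lambda>y. a * f y) x = a * T f x"
  using pc_linear[of x a f 0 f] by simp

lemma pc_uniform_limit:
  assumes F: "uniform_limit X F U sequentially"
  shows "uniform_limit X (\<lambda>n. T (F n)) (T U) sequentially"
  unfolding uniform_limit_iff
proof (intro allI impI)
  fix e :: real assume e: "e > 0"
  have "\<forall>\<^sub>F n in sequentially. \<forall>x\<in>X. dist (F n x) (U x) < e / 2"
    using F e unfolding uniform_limit_iff by (meson half_gt_zero)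
  then show "\<forall>\<^sub>F n in sequentially. \<forall>x\<in>X. dist (T (F n) x) (T U x) < e"
  proof (rule eventually_mono, intro ballI)
    fix n x assume n: "\<forall>x\<in>X. dist (F n x) (U x) < e / 2" and x: "x \<in> X"
    have "T (F n) x - T U x = T (\<lambda>y. 1 * F n y + (-1) * U y) x"
      using pc_linear[OF x, of 1 "F n" "-1" U] by simp
    also have "\<bar>\<dots>\<bar> \<le> e / 2"
      using n e by (intro pc_bound[OF _ _ x]) (auto simp: dist_real_def)
    finally show "dist (T (F n) x) (T U x) < e" using e by (simp add: dist_real_def)
  qed
qed

end

lemma positive_contraction_id: "positive_contraction X (\<lambda>f. f)"
  unfolding positive_contraction_def by auto

lemma positive_contraction_comp:
  assumes T: "positive_contraction X T" and U: "positive_contraction X U"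
  shows "positive_contraction X (\<lambda>f. T (U f))"
  unfolding positive_contraction_def
proof (intro conjI allI impI ballI)
  fix f g a b x assume x: "x \<in> X"
  have "T (U (\<lambda>y. a * f y + b * g y)) x = T (\<lambda>y. a * U f y + b * U g y) x"
    using pc_linear[OF U] x by (intro pc_local[OF T]) auto
  also have "\<dots> = a * T (U f) x + b * T (U g) x" using pc_linear[OF T] x by auto
  finally show "T (U (\<lambda>y. a * f y + b * g y)) x = a * T (U f) x + b * T (U g) x" .
next
  fix f g :: "(nat \<Rightarrow> nat) \<Rightarrow> real" and x assume "\<forall>y\<in>X. f y = g y" "x \<in> X"
  then show "T (U f) x = T (U g) x" using pc_local[OF U, of f g] by (intro pc_local[OF T]) auto
next
  fix f :: "(nat \<Rightarrow> nat) \<Rightarrow> real" and B :: real and x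
  assume "0 \<le> B" "\<forall>y\<in>X. \<bar>f y\<bar> \<le> B" "x \<in> X"
  then show "\<bar>T (U f) x\<bar> \<le> B" using pc_bound[OF U, of B f] by (intro pc_bound[OF T]) auto
next
  fix f :: "(nat \<Rightarrow> nat) \<Rightarrow> real" and x assume "\<forall>y\<in>X. 0 \<le> f y" "x \<in> X"
  then show "0 \<le> T (U f) x" using pc_nonneg[OF U, of f] by (intro pc_nonneg[OF T]) auto
qed (use pc_ucb_on[OF T] pc_ucb_on[OF U] in blast)

lemma positive_contraction_funpow:
  assumes "positive_contraction X T"
  shows "positive_contraction X (T ^^ k)"
proof (induction k)
  case 0 then show ?case using positive_contraction_id by (simp add: id_def)
next
  case (Suc k)
  have "T ^^ Suc k = (\<lambda>f. T ((T ^^ k) f))" by (simp add: fun_eq_iff)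
  then show ?case using positive_contraction_comp[OF assms Suc.IH] by simp
qed


section \<open>Restricted transfer operators of a normalised potential\<close>

locale normalised_potential =
  fixes L :: nat and A :: "nat \<Rightarrow> nat \<Rightarrow> bool" and \<phi> :: "(nat \<Rightarrow> nat) \<Rightarrow> real"
  assumes holder: "holder_on (Sigma_sub {1..L} A) \<phi>"
    and normalised: "\<forall>x\<in>Sigma_sub {1..L} A. transfer {1..L} A \<phi> (\<lambda>_. 1) x = 1"
begin

abbreviation X :: "(nat \<Rightarrow> nat) set" where
  "X \<equiv> Sigma_sub {1..L} A"

definition LR :: "nat set \<Rightarrow> ((nat \<Rightarrow> nat) \<Rightarrow> real) \<Rightarrow> (nat \<Rightarrow> nat) \<Rightarrow> real" where
  "LR E f = transfer {1..L} A \<phi> (\<lambda>y. f y * (if y 0 \<in> E then 1 else 0))"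

lemma transfer_Delta_eq_LR: "transfer_Delta {1..L} A E \<phi> = LR E"
  by (simp add: fun_eq_iff transfer_Delta_def LR_def)

definition pre_symbols :: "nat set \<Rightarrow> (nat \<Rightarrow> nat) \<Rightarrow> nat set" where
  "pre_symbols E x = {a \<in> {1..L}. A a (x 0) \<and> a \<in> E}"

lemma card_pre_symbols: "card (pre_symbols E x) \<le> L"
proof -
  have "pre_symbols E x \<subseteq> {1..L}" by (auto simp: pre_symbols_def)
  then show ?thesis using card_mono[of "{1..L}"] by fastforce
qed

lemma LR_prepend:
  assumes "x \<in> X"
  shows "LR E f x = (\<Sum>a\<in>pre_symbols E x. exp (\<phi> (prepend a x)) * f (prepend a x))"
proof -
  have "LR E f x = (\<Sum>a\<in>{a \<in> {1..L}. A a (x 0)}.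
          if a \<in> E then exp (\<phi> (prepend a x)) * f (prepend a x) else 0)"
    unfolding LR_def transfer_prepend[OF assms] by (intro sum.cong) auto
  also have "\<dots> = (\<Sum>a\<in>{a \<in> {a \<in> {1..L}. A a (x 0)}. a \<in> E}.
                      exp (\<phi> (prepend a x)) * f (prepend a x))"
    by (rule sum.inter_filter[symmetric]) simp
  also have "{a \<in> {a \<in> {1..L}. A a (x 0)}. a \<in> E} = pre_symbols E x"
    by (auto simp: pre_symbols_def)
  finally show ?thesis .
qed

lemma LR_outside: "x \<notin> X \<Longrightarrow> LR E f x = 0"
  by (simp add: LR_def transfer_outside)

lemma prepend_pre_symbols: "x \<in> X \<Longrightarrow> a \<in> pre_symbols E x \<Longrightarrow> prepend a x \<in> X"
  by (auto simp: pre_symbols_def intro: prepend_Sigma_sub)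

text \<open>Normalisation: the weights of all preimages of a point sum to one, so those of the
  preimages with first symbol in \<open>E\<close> sum to at most one.\<close>

lemma weights_sum_le_one: "x \<in> X \<Longrightarrow> (\<Sum>a\<in>pre_symbols E x. exp (\<phi> (prepend a x))) \<le> 1"
proof -
  assume x: "x \<in> X"
  have "(\<Sum>a\<in>pre_symbols E x. exp (\<phi> (prepend a x))) \<le> (\<Sum>a\<in>pre_symbols UNIV x. exp (\<phi> (prepend a x)))"
    by (intro sum_mono2) (auto simp: pre_symbols_def)
  also have "\<dots> = 1" using normalised x LR_prepend[OF x, of UNIV "\<lambda>_. 1"] by (simp add: LR_def)
  finally show ?thesis .
qed

lemma phi_ucb_on: "ucb_on X \<phi>"
  by (rule holder_on_ucb_on[OF holder])

text \<open>A point and its preimages are at most \<open>L\<close> many, and prepending the same symbol preserves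
  agreement of initial words; this gives the regularising effect of \<open>LR E\<close>.\<close>

lemma LR_ucb_on:
  assumes f: "ucb_on X f"
  shows "ucb_on X (LR E f)"
proof -
  define G where "G y = exp (\<phi> y) * f y" for y
  have G: "ucb_on X G" unfolding G_def by (intro ucb_on_mult ucb_on_exp phi_ucb_on f)
  obtain B where B0: "0 \<le> B" and B: "\<And>x. x \<in> X \<Longrightarrow> \<bar>G x\<bar> \<le> B" using ucb_on_bound[OF G] by blast
  show ?thesis
  proof (rule ucb_onI[where B = "real L * B"])
    fix e :: real assume e: "e > 0"
    then have d: "e / (real L + 1) > 0" by simp
    obtain N where N: "\<And>x y. x \<in> X \<Longrightarrow> y \<in> X \<Longrightarrow> \<forall>t<N. x t = y t \<Longrightarrow> \<bar>G x - G y\<bar> \<le> e / (real L + 1)"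
      using ucb_on_cylinder[OF G d] by blast
    show "\<exists>N. \<forall>x\<in>X. \<forall>y\<in>X. (\<forall>t<N. x t = y t) \<longrightarrow> \<bar>LR E f x - LR E f y\<bar> \<le> e"
    proof (intro exI[of _ "Suc N"] ballI impI)
      fix x y assume x: "x \<in> X" and y: "y \<in> X" and xy: "\<forall>t<Suc N. x t = y t"
      then have same: "pre_symbols E y = pre_symbols E x" by (simp add: pre_symbols_def)
      have "\<bar>LR E f x - LR E f y\<bar> = \<bar>\<Sum>a\<in>pre_symbols E x. G (prepend a x) - G (prepend a y)\<bar>"
        unfolding LR_prepend[OF x] LR_prepend[OF y] same G_def by (simp add: sum_subtractf)
      also have "\<dots> \<le> (\<Sum>a\<in>pre_symbols E x. e / (real L + 1))"
      proof (rule order_trans[OF sum_abs sum_mono])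
        fix a assume "a \<in> pre_symbols E x"
        moreover have "\<forall>t<N. prepend a x t = prepend a y t" using xy by (auto simp: prepend_def split: nat.splits)
        ultimately show "\<bar>G (prepend a x) - G (prepend a y)\<bar> \<le> e / (real L + 1)"
          using N prepend_pre_symbols x y same by metis
      qed
      also have "\<dots> \<le> real L * (e / (real L + 1))"
        using card_pre_symbols[of E x] d by (simp only: sum_constant) (intro mult_right_mono; simp)
      also have "\<dots> \<le> e" using e by (simp add: field_simps)
      finally show "\<bar>LR E f x - LR E f y\<bar> \<le> e" .
    qed
  next
    fix x assume x: "x \<in> X"
    have "\<bar>LR E f x\<bar> \<le> (\<Sum>a\<in>pre_symbols E x. B)"
      unfolding LR_prepend[OF x] G_def[symmetric]
      by (rule order_trans[OF sum_abs sum_mono]) (use B prepend_pre_symbols x in blast)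
    also have "\<dots> \<le> real L * B"
      using card_pre_symbols[of E x] B0 by (simp add: mult_right_mono)
    finally show "\<bar>LR E f x\<bar> \<le> real L * B" .
  qed
qed

text \<open>Each \<open>LR E\<close> is a positive contraction; the bound comes from the normalisation.\<close>

lemma LR_positive_contraction: "positive_contraction X (LR E)"
  unfolding positive_contraction_def
proof (intro conjI allI impI ballI)
  fix f g :: "(nat \<Rightarrow> nat) \<Rightarrow> real" and a b x assume x: "x \<in> X"
  show "LR E (\<lambda>y. a * f y + b * g y) x = a * LR E f x + b * LR E g x"
    unfolding LR_prepend[OF x] sum_distrib_left sum.distrib[symmetric]
    by (intro sum.cong) (auto simp: algebra_simps)
next
  fix f g :: "(nat \<Rightarrow> nat) \<Rightarrow> real" and x assume "\<forall>y\<in>X. f y = g y" and x: "x \<in> X"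
  then show "LR E f x = LR E g x"
    unfolding LR_prepend[OF x] using prepend_pre_symbols[OF x] by (intro sum.cong) auto
next
  fix f :: "(nat \<Rightarrow> nat) \<Rightarrow> real" and B :: real and x
  assume B: "0 \<le> B" "\<forall>y\<in>X. \<bar>f y\<bar> \<le> B" and x: "x \<in> X"
  have "\<bar>LR E f x\<bar> \<le> (\<Sum>a\<in>pre_symbols E x. exp (\<phi> (prepend a x)) * B)"
    unfolding LR_prepend[OF x]
    by (rule order_trans[OF sum_abs sum_mono])
      (use B prepend_pre_symbols[OF x] in \<open>auto simp: abs_mult intro: mult_left_mono\<close>)
  also have "\<dots> \<le> 1 * B"
    unfolding sum_distrib_right[symmetric] using weights_sum_le_one[OF x, of E] B(1)
    by (rule mult_right_mono)
  finally show "\<bar>LR E f x\<bar> \<le> B" by simp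
next
  fix f :: "(nat \<Rightarrow> nat) \<Rightarrow> real" and x assume "\<forall>y\<in>X. 0 \<le> f y" and x: "x \<in> X"
  then show "0 \<le> LR E f x"
    unfolding LR_prepend[OF x] using prepend_pre_symbols[OF x] by (intro sum_nonneg) auto
qed (rule LR_ucb_on)

end


section \<open>The cyclic subsystem and its phase operators\<close>

text \<open>Phases are indexed by all natural numbers, modulo \<open>m\<close>.\<close>

locale cyclic_subsystem = normalised_potential +
  fixes m :: nat and \<Delta> :: "nat set" and D :: "nat \<Rightarrow> nat set"
  assumes m_pos: "0 < m"
    and Delta_sub: "\<Delta> \<subseteq> {1..L}"
    and irreducible: "irreducible_on \<Delta> A"
    and cyclic: "cyclic_decomposition \<Delta> A D m"
begin

lemma phase_sub_Delta: "D (t mod m) \<subseteq> \<Delta>"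
  using cyclic m_pos unfolding cyclic_decomposition_def by auto

lemma Delta_phase: "a \<in> \<Delta> \<Longrightarrow> \<exists>s<m. a \<in> D s"
  using cyclic unfolding cyclic_decomposition_def by auto

lemma phase_unique: "s < m \<Longrightarrow> s' < m \<Longrightarrow> a \<in> D s \<Longrightarrow> a \<in> D s' \<Longrightarrow> s = s'"
  using cyclic unfolding cyclic_decomposition_def by blast

lemma phase_step:
  assumes "a \<in> D (t mod m)" "b \<in> \<Delta>" "A a b"
  shows "b \<in> D (Suc t mod m)"
proof -
  obtain s' where s': "s' < m" "b \<in> D s'" using Delta_phase assms(2) by blast
  then have "s' = (t mod m + 1) mod m"
    using cyclic assms m_pos unfolding cyclic_decomposition_def by (meson mod_less_divisor)
  then show ?thesis using s' by (simp add: mod_Suc_eq)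
qed

lemma phase_back:
  assumes "b \<in> D (Suc t mod m)" "a \<in> \<Delta>" "A a b"
  shows "a \<in> D (t mod m)"
proof -
  obtain s where s: "s < m" "a \<in> D s" using Delta_phase assms(2) by blast
  then have "b \<in> D (Suc s mod m)" using phase_step[of a s b] assms phase_sub_Delta by auto
  then have "Suc s mod m = Suc t mod m" using phase_unique assms(1) m_pos by simp
  then have "s mod m = t mod m" by (metis Zero_not_Suc mod_Suc nat.inject)
  then show ?thesis using s by simp
qed

definition L_phase :: "nat \<Rightarrow> ((nat \<Rightarrow> nat) \<Rightarrow> real) \<Rightarrow> (nat \<Rightarrow> nat) \<Rightarrow> real" where
  "L_phase t = LR (D (t mod m))"

primrec L_phase_pow :: "nat \<Rightarrow> nat \<Rightarrow> ((nat \<Rightarrow> nat) \<Rightarrow> real) \<Rightarrow> (nat \<Rightarrow> nat) \<Rightarrow> real" where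
  "L_phase_pow j 0 f = f"
| "L_phase_pow j (Suc l) f = L_phase_pow (Suc j) l (L_phase j f)"

lemma L_phase_pow_positive_contraction: "positive_contraction X (L_phase_pow j l)"
proof (induction l arbitrary: j)
  case 0 then show ?case using positive_contraction_id by (simp add: fun_eq_iff)
next
  case (Suc l)
  have "L_phase_pow j (Suc l) = (\<lambda>f. L_phase_pow (Suc j) l (L_phase j f))" by (simp add: fun_eq_iff)
  then show ?case
    using positive_contraction_comp[OF Suc.IH LR_positive_contraction] by (simp add: L_phase_def)
qed

lemma L_phase_pow_add: "L_phase_pow j (a + b) f = L_phase_pow (j + a) b (L_phase_pow j a f)"
  by (induction a arbitrary: j f) simp_all

lemma L_phase_pow_Suc_right: "L_phase_pow j (Suc l) f = L_phase (j + l) (L_phase_pow j l f)"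
  using L_phase_pow_add[of j l 1 f] by simp

lemma L_phase_pow_mod: "j mod m = j' mod m \<Longrightarrow> L_phase_pow j l = L_phase_pow j' l"
proof (induction l arbitrary: j j')
  case (Suc l)
  then have "L_phase_pow (Suc j) l = L_phase_pow (Suc j') l" by (metis mod_Suc_eq)
  moreover have "L_phase j = L_phase j'" using Suc.prems by (simp add: L_phase_def)
  ultimately show ?case by (simp only: L_phase_pow.simps)
qed (simp add: fun_eq_iff)

lemma L_phase_pow_period: "L_phase_pow (j + n * m) l = L_phase_pow j l"
  by (rule L_phase_pow_mod) simp

lemma L_phase_pow_block: "L_phase_pow i (n * m + l) f = L_phase_pow i l (L_phase_pow i (n * m) f)"
  using L_phase_pow_add[of i "n * m" l f] by (simp add: L_phase_pow_period)

lemma L_phase_vanishes: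
  assumes "y 0 \<in> \<Delta>" "y 0 \<notin> D (Suc t mod m)"
  shows "L_phase t F y = 0"
proof (cases "y \<in> X")
  case True
  have "pre_symbols (D (t mod m)) y = {}"
    using phase_step assms by (auto simp: pre_symbols_def)
  then show ?thesis by (simp add: L_phase_def LR_prepend[OF True])
qed (simp add: L_phase_def LR_outside)

lemma LR_Delta_phase_supported:
  assumes F: "\<And>y. y \<in> X \<Longrightarrow> y 0 \<in> \<Delta> \<Longrightarrow> y 0 \<notin> D (t mod m) \<Longrightarrow> F y = 0" and x: "x \<in> X"
  shows "LR \<Delta> F x = L_phase t F x"
  unfolding L_phase_def LR_prepend[OF x]
proof (rule sum.mono_neutral_right)
  show "pre_symbols (D (t mod m)) x \<subseteq> pre_symbols \<Delta> x"
    using phase_sub_Delta by (auto simp: pre_symbols_def)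
  show "\<forall>a\<in>pre_symbols \<Delta> x - pre_symbols (D (t mod m)) x. exp (\<phi> (prepend a x)) * F (prepend a x) = 0"
  proof
    fix a assume a: "a \<in> pre_symbols \<Delta> x - pre_symbols (D (t mod m)) x"
    then have "prepend a x \<in> X" "a \<in> \<Delta>" "a \<notin> D (t mod m)"
      using prepend_pre_symbols[OF x] by (auto simp: pre_symbols_def)
    then show "exp (\<phi> (prepend a x)) * F (prepend a x) = 0" using F[of "prepend a x"] by simp
  qed
qed (simp add: pre_symbols_def)

lemma LR_Delta_L_phase: "x \<in> X \<Longrightarrow> LR \<Delta> (L_phase t F) x = L_phase (Suc t) (L_phase t F) x"
  by (rule LR_Delta_phase_supported) (simp add: L_phase_vanishes)

lemma LR_Delta_at_phase:
  assumes "x 0 \<in> D (Suc t mod m)"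
  shows "LR \<Delta> F x = L_phase t F x"
proof (cases "x \<in> X")
  case True
  have "pre_symbols \<Delta> x = pre_symbols (D (t mod m)) x"
    using phase_back[OF assms] phase_sub_Delta by (auto simp: pre_symbols_def)
  then show ?thesis by (simp add: L_phase_def LR_prepend[OF True])
qed (simp add: L_phase_def LR_outside)

lemma L_phase_local:
  assumes "\<And>y. y \<in> X \<Longrightarrow> y 0 \<in> D (t mod m) \<Longrightarrow> F y = G y"
  shows "L_phase t F x = L_phase t G x"
proof (cases "x \<in> X")
  case True
  then show ?thesis unfolding L_phase_def LR_prepend[OF True]
    using assms prepend_pre_symbols[OF True] by (intro sum.cong) (auto simp: pre_symbols_def)
qed (simp add: L_phase_def LR_outside)

lemma LR_Delta_pow_L_phase_pow:
  "x \<in> X \<Longrightarrow> (LR \<Delta> ^^ k) (L_phase_pow j (Suc l) f) x = L_phase_pow j (Suc l + k) f x"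
proof (induction k arbitrary: x)
  case (Suc k)
  have "(LR \<Delta> ^^ Suc k) (L_phase_pow j (Suc l) f) x = LR \<Delta> ((LR \<Delta> ^^ k) (L_phase_pow j (Suc l) f)) x"
    by simp
  also have "\<dots> = LR \<Delta> (L_phase (j + (l + k)) (L_phase_pow j (l + k) f)) x"
    by (simp only: add_Suc L_phase_pow_Suc_right[symmetric] pc_local[OF LR_positive_contraction, OF Suc.IH Suc.prems])
  also have "\<dots> = L_phase (Suc (j + (l + k))) (L_phase (j + (l + k)) (L_phase_pow j (l + k) f)) x"
    by (rule LR_Delta_L_phase[OF Suc.prems])
  also have "\<dots> = L_phase_pow j (Suc l + Suc k) f x"
    by (simp only: add_Suc add_Suc_right L_phase_pow_Suc_right)
  finally show ?case .
qed simp

lemma LR_Delta_pow_one: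
  assumes "1 \<le> k" "x 0 \<in> D ((j + k) mod m)"
  shows "(LR \<Delta> ^^ k) (\<lambda>_. 1) x = L_phase_pow j k (\<lambda>_. 1) x"
  using assms
proof (induction k arbitrary: x rule: dec_induct)
  case base
  then show ?case using LR_Delta_at_phase[of x j] by simp
next
  case (step k)
  have "(LR \<Delta> ^^ Suc k) (\<lambda>_. 1) x = L_phase (j + k) ((LR \<Delta> ^^ k) (\<lambda>_. 1)) x"
    using LR_Delta_at_phase[of x "j + k"] step.prems by simp
  also have "\<dots> = L_phase (j + k) (L_phase_pow j k (\<lambda>_. 1)) x"
    by (intro L_phase_local step.IH) simp
  finally show ?case by (simp only: L_phase_pow_Suc_right)
qed

definition cyc_preimages :: "nat \<Rightarrow> nat \<Rightarrow> (nat \<Rightarrow> nat) \<Rightarrow> (nat \<Rightarrow> nat) set" where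
  "cyc_preimages j l x = {y \<in> X. (shift ^^ l) y = x \<and> (\<forall>s<l. y s \<in> D ((j + s) mod m))}"

lemma transfer_m_eq_sum:
  "transfer_m {1..L} A D m j \<phi> \<psi> x = (\<Sum>y\<in>cyc_preimages j m x. exp (birkhoff m \<phi> y) * \<psi> y)"
  unfolding transfer_m_def cyc_preimages_def by simp

lemma finite_cyc_preimages: "finite (cyc_preimages j l x)"
  by (rule finite_subset[OF _ finite_preimages[of "{1..L}" A l x]]) (auto simp: cyc_preimages_def)

lemma cyc_preimages_Suc:
  "cyc_preimages j (Suc l) x = {y \<in> X. shift y \<in> cyc_preimages (Suc j) l x \<and> y 0 \<in> D (j mod m)}"
proof -
  have "(\<forall>s<Suc l. y s \<in> D ((j + s) mod m)) \<longleftrightarrow>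
        y 0 \<in> D (j mod m) \<and> (\<forall>s<l. shift y s \<in> D ((Suc j + s) mod m))" for y
    by (simp add: All_less_Suc2 shift_def)
  then show ?thesis
    unfolding cyc_preimages_def by (auto simp: funpow_shift_Suc simp del: funpow.simps intro: shift_Sigma_sub)
qed

lemma cyc_preimages_fibre:
  assumes "z \<in> cyc_preimages (Suc j) l x"
  shows "{y \<in> cyc_preimages j (Suc l) x. shift y = z} = (\<lambda>a. prepend a z) ` pre_symbols (D (j mod m)) z"
proof -
  have z: "z \<in> X" using assms by (simp add: cyc_preimages_def)
  have "{y \<in> cyc_preimages j (Suc l) x. shift y = z} = {y \<in> {y \<in> X. shift y = z}. y 0 \<in> D (j mod m)}"
    using assms unfolding cyc_preimages_Suc by auto
  also have "\<dots> = (\<lambda>a. prepend a z) ` pre_symbols (D (j mod m)) z"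
    unfolding preimages_Sigma_sub[OF z] pre_symbols_def by auto
  finally show ?thesis .
qed

lemma L_phase_pow_sum:
  "x \<in> X \<Longrightarrow> L_phase_pow j l f x = (\<Sum>y\<in>cyc_preimages j l x. exp (birkhoff l \<phi> y) * f y)"
proof (induction l arbitrary: j f)
  case 0
  then have "cyc_preimages j 0 x = {x}" by (auto simp: cyc_preimages_def)
  then show ?case by (simp add: birkhoff_def)
next
  case (Suc l)
  let ?h = "\<lambda>y. exp (birkhoff (Suc l) \<phi> y) * f y"
  have "L_phase_pow j (Suc l) f x
      = (\<Sum>z\<in>cyc_preimages (Suc j) l x. exp (birkhoff l \<phi> z) * L_phase j f z)"
    using Suc by simp
  also have "\<dots> = (\<Sum>z\<in>cyc_preimages (Suc j) l x. \<Sum>y\<in>{y \<in> cyc_preimages j (Suc l) x. shift y = z}. ?h y)"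
  proof (rule sum.cong[OF refl])
    fix z assume z: "z \<in> cyc_preimages (Suc j) l x"
    then have "z \<in> X" by (simp add: cyc_preimages_def)
    then show "exp (birkhoff l \<phi> z) * L_phase j f z = (\<Sum>y\<in>{y \<in> cyc_preimages j (Suc l) x. shift y = z}. ?h y)"
      unfolding cyc_preimages_fibre[OF z] L_phase_def LR_prepend[OF \<open>z \<in> X\<close>]
      by (subst sum.reindex) (auto intro!: inj_onI sum.cong simp: sum_distrib_left birkhoff_Suc exp_add
          dest: arg_cong[where f = "\<lambda>y. y 0"])
  qed
  also have "\<dots> = (\<Sum>y\<in>cyc_preimages j (Suc l) x. ?h y)"
    by (rule sum.group[OF finite_cyc_preimages finite_cyc_preimages]) (auto simp: cyc_preimages_Suc)
  finally show ?case .
qed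

lemma transfer_m_eq_L_phase_pow: "x \<in> X \<Longrightarrow> transfer_m {1..L} A D m j \<phi> \<psi> x = L_phase_pow j m \<psi> x"
  unfolding transfer_m_eq_sum by (simp add: L_phase_pow_sum)

lemma transfer_m_funpow:
  "x \<in> X \<Longrightarrow> (transfer_m {1..L} A D m j \<phi> ^^ n) f x = L_phase_pow j (n * m) f x"
proof (induction n arbitrary: x)
  case (Suc n)
  have "(transfer_m {1..L} A D m j \<phi> ^^ Suc n) f x = L_phase_pow j m ((transfer_m {1..L} A D m j \<phi> ^^ n) f) x"
    unfolding funpow.simps comp_apply by (rule transfer_m_eq_L_phase_pow[OF Suc.prems])
  also have "\<dots> = L_phase_pow j m (L_phase_pow j (n * m) f) x"
    by (rule pc_local[OF L_phase_pow_positive_contraction _ Suc.prems]) (rule Suc.IH)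
  finally show ?case by (simp add: L_phase_pow_block[of j n m f, symmetric] add.commute)
qed simp

abbreviation Om :: "nat \<Rightarrow> (nat \<Rightarrow> nat) set" where
  "Om i \<equiv> Omega \<Delta> A D i"

lemma Omega_sub_X: "Om i \<subseteq> X"
  using Sigma_sub_mono[OF Delta_sub] by (auto simp: Omega_def)

definition Delta_path :: "(nat \<Rightarrow> nat) \<Rightarrow> nat \<Rightarrow> bool" where
  "Delta_path w l \<longleftrightarrow> (\<forall>s\<le>l. w s \<in> \<Delta>) \<and> (\<forall>s<l. A (w s) (w (Suc s)))"

lemma Sigma_sub_Delta_path: "z \<in> Sigma_sub \<Delta> A \<Longrightarrow> Delta_path z l"
  by (simp add: Sigma_sub_def Delta_path_def)

lemma Delta_path_phase:
  assumes w: "Delta_path w l" and w0: "w 0 \<in> D (j mod m)"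
  shows "s \<le> l \<Longrightarrow> w s \<in> D ((j + s) mod m)"
proof (induction s)
  case (Suc s)
  then have "w s \<in> D ((j + s) mod m)" by simp
  then show ?case using phase_step[of "w s" "j + s" "w (Suc s)"] w Suc.prems
    unfolding Delta_path_def by simp
qed (use w0 in simp)

lemma Delta_path_from_irreducible:
  assumes "a \<in> \<Delta>" "b \<in> \<Delta>"
  obtains p q where "0 < p" "Delta_path q p" "q 0 = a" "q p = b"
proof -
  obtain p where p: "0 < p" "(a, b) \<in> adj \<Delta> A ^^ p"
    using irreducible assms unfolding irreducible_on_def by blast
  then obtain q where q: "q 0 = a" "q p = b" "\<forall>r<p. (q r, q (Suc r)) \<in> adj \<Delta> A"
    unfolding relpow_fun_conv by blast
  have "Delta_path q p" unfolding Delta_path_def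
  proof (intro conjI allI impI)
    fix s assume "s \<le> p"
    then show "q s \<in> \<Delta>" using q assms by (cases "s < p") (auto simp: adj_def)
  qed (use q in \<open>auto simp: adj_def\<close>)
  then show ?thesis by (rule that[OF p(1)]) (use q in auto)
qed

lemma Delta_path_append:
  assumes w: "Delta_path w l" and q: "Delta_path q p" and wq: "q 0 = w l"
  shows "Delta_path (\<lambda>t. if t \<le> l then w t else q (t - l)) (l + p)"
proof -
  let ?v = "\<lambda>t. if t \<le> l then w t else q (t - l)"
  have "?v s \<in> \<Delta>" if "s \<le> l + p" for s
    using w q that unfolding Delta_path_def by (cases "s \<le> l") auto
  moreover have "A (?v s) (?v (Suc s))" if "s < l + p" for s
  proof (cases "s < l")
    case False
    then have "?v s = q (s - l)" "?v (Suc s) = q (Suc (s - l))" "s - l < p"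
      using wq that by (auto simp: Suc_diff_le)
    then show ?thesis using q unfolding Delta_path_def by simp
  qed (use w in \<open>auto simp: Delta_path_def\<close>)
  ultimately show ?thesis unfolding Delta_path_def by blast
qed

text \<open>Every symbol of \<open>\<Delta>\<close> starts a point of \<open>\<Sigma>\<^sub>\<Delta>\<close>, since every symbol has a successor.\<close>

lemma infinite_Delta_path:
  assumes "a \<in> \<Delta>"
  obtains z where "z \<in> Sigma_sub \<Delta> A" "z 0 = a"
proof -
  have "\<exists>c\<in>\<Delta>. A b c" if b: "b \<in> \<Delta>" for b
  proof -
    obtain p q where "0 < p" "Delta_path q p" "q 0 = b"
      using Delta_path_from_irreducible[OF b b] by blast
    then show ?thesis unfolding Delta_path_def by (metis Suc_leI)
  qed
  then obtain nxt where nxt: "\<And>b. b \<in> \<Delta> \<Longrightarrow> nxt b \<in> \<Delta> \<and> A b (nxt b)" by metis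
  have "(nxt ^^ t) a \<in> \<Delta>" for t by (induction t) (simp_all add: nxt assms)
  then show ?thesis using nxt by (intro that[of "\<lambda>t. (nxt ^^ t) a"]) (auto simp: Sigma_sub_def)
qed

lemma splice_cyc_preimages:
  assumes w: "Delta_path w l" and w0: "w 0 \<in> D (j mod m)" and wl: "w l = x 0" and x: "x \<in> X"
  shows "splice w l x \<in> cyc_preimages j l x"
proof -
  have "\<forall>s<l. w s \<in> {1..L} \<and> A (w s) (w (Suc s))"
    using w Delta_sub unfolding Delta_path_def by (meson less_imp_le subsetD)
  then have "splice w l x \<in> X" using wl x by (rule splice_Sigma_sub)
  moreover have "splice w l x s \<in> D ((j + s) mod m)" if "s < l" for s
    using Delta_path_phase[OF w w0, of s] that by (simp add: splice_def)
  ultimately show ?thesis by (simp add: cyc_preimages_def funpow_shift_splice)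
qed

lemma cyc_preimages_Omega:
  assumes i: "i < m" and x: "x \<in> Om i" and y: "y \<in> cyc_preimages i l x"
  shows "y \<in> Om i"
proof -
  have yX: "y \<in> X" and yx: "\<And>t. y (t + l) = x t" and yD: "\<And>s. s < l \<Longrightarrow> y s \<in> D ((i + s) mod m)"
    using y funpow_shift[of l y] unfolding cyc_preimages_def by auto
  have "y t \<in> \<Delta>" for t
  proof (cases "t < l")
    case False
    then show ?thesis using yx[of "t - l"] x by (simp add: Omega_def Sigma_sub_def)
  qed (use yD phase_sub_Delta in blast)
  moreover have "y 0 \<in> D i" using yx[of 0] yD[of 0] x i by (cases "l = 0") (auto simp: Omega_def)
  ultimately show ?thesis using yX by (simp add: Omega_def Sigma_sub_def)
qed

lemma cyc_preimages_shadowed: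
  assumes i: "i < m" and l: "1 \<le> l" and y: "y \<in> cyc_preimages i l x"
  obtains z where "z \<in> Om i" "\<forall>t<l. z t = y t"
proof -
  have yX: "y \<in> X" and yD: "\<And>s. s < l \<Longrightarrow> y s \<in> D ((i + s) mod m)"
    using y unfolding cyc_preimages_def by auto
  have yDelta: "\<And>s. s < l \<Longrightarrow> y s \<in> \<Delta>" using yD phase_sub_Delta by blast
  obtain z' where z': "z' \<in> Sigma_sub \<Delta> A" "z' 0 = y (l - 1)"
    using infinite_Delta_path yDelta l by (metis diff_less zero_less_one less_le_trans)
  have "splice y (l - 1) z' \<in> Sigma_sub \<Delta> A"
    using yX yDelta z' by (intro splice_Sigma_sub) (auto simp: Sigma_sub_def)
  moreover have "splice y (l - 1) z' 0 \<in> D i"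
    using yD[of 0] l z' i by (cases "l = 1") (auto simp: splice_def)
  moreover have "\<forall>t<l. splice y (l - 1) z' t = y t"
  proof (intro allI impI)
    fix t assume "t < l"
    then have "t < l - 1 \<or> t = l - 1" by linarith
    then show "splice y (l - 1) z' t = y t" using z' by (auto simp: splice_def)
  qed
  ultimately show ?thesis by (intro that) (auto simp: Omega_def)
qed

lemma Delta_path_to_phase:
  assumes i: "i < m" and z: "z \<in> Om i" and N: "1 \<le> N" and b: "b \<in> D i"
  obtains n w where "N \<le> n * m" "Delta_path w (n * m)" "w 0 \<in> D i" "w (n * m) = b"
    "\<forall>t<N. w t = z t"
proof -
  have zS: "z \<in> Sigma_sub \<Delta> A" and z0: "z 0 \<in> D i" using z by (auto simp: Omega_def)
  have "z (N - 1) \<in> \<Delta>" "b \<in> \<Delta>" using zS b phase_sub_Delta[of i] i by (auto simp: Sigma_sub_def)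
  then obtain p q where p: "0 < p" and q: "Delta_path q p" "q 0 = z (N - 1)" "q p = b"
    using Delta_path_from_irreducible by metis
  define l where "l = N - 1 + p"
  define w where "w t = (if t \<le> N - 1 then z t else q (t - (N - 1)))" for t
  have w: "Delta_path w l" unfolding w_def l_def
    by (rule Delta_path_append[OF Sigma_sub_Delta_path[OF zS] q(1)]) (use q in simp)
  have w0: "w 0 \<in> D (i mod m)" and wl: "w l = b" using z0 i p q by (auto simp: w_def l_def)
  have "(i + l) mod m = i"
    using Delta_path_phase[OF w w0, of l] phase_unique[of "(i + l) mod m" i b] b i m_pos wl by simp
  then have "l mod m = 0" using i by (metis add.commute add_right_cancel div_mod_decomp mod_mult_self2_is_0)
  then have lm: "l div m * m = l" by (metis div_mult_mod_eq add_0_right)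
  moreover have "N \<le> l" "\<forall>t<N. w t = z t" using p by (auto simp: w_def l_def)
  ultimately show ?thesis using w w0 wl i by (intro that[of "l div m" w]) auto
qed

lemma Omega_reachable:
  assumes i: "i < m" and z: "z \<in> Om i" and N: "1 \<le> N" and b: "b \<in> D i"
  obtains n where "\<And>x. x \<in> X \<Longrightarrow> x 0 = b \<Longrightarrow> \<exists>y\<in>cyc_preimages i (n * m) x. \<forall>t<N. y t = z t"
proof -
  obtain n w where Nn: "N \<le> n * m"
    and w: "Delta_path w (n * m)" "w 0 \<in> D i" "w (n * m) = b" and wz: "\<forall>t<N. w t = z t"
    using Delta_path_to_phase[OF assms] by blast
  show ?thesis
  proof (rule that)
    fix x assume "x \<in> X" "x 0 = b"
    then have "splice w (n * m) x \<in> cyc_preimages i (n * m) x"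
      using w i by (intro splice_cyc_preimages) auto
    moreover have "\<forall>t<N. splice w (n * m) x t = z t" using Nn wz by (simp add: splice_def)
    ultimately show "\<exists>y\<in>cyc_preimages i (n * m) x. \<forall>t<N. y t = z t" by blast
  qed
qed

subsection \<open>Eigenfunctions of \<open>L^(m)_i\<close>\<close>

definition eigenfunction :: "real \<Rightarrow> nat \<Rightarrow> ((nat \<Rightarrow> nat) \<Rightarrow> real) \<Rightarrow> bool" where
  "eigenfunction lam i w \<longleftrightarrow> ucb_on X w \<and> (\<forall>x\<in>X. L_phase_pow i m w x = lam * w x)"

lemma eigenfunction_iterate:
  assumes w: "eigenfunction lam i w" and x: "x \<in> X"
  shows "L_phase_pow i (n * m) w x = lam ^ n * w x"
  using x
proof (induction n arbitrary: x)
  case (Suc n)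
  have "L_phase_pow i (Suc n * m) w x = L_phase_pow i m (L_phase_pow i (n * m) w) x"
    using L_phase_pow_block[of i n m w] by (simp add: add.commute)
  also have "\<dots> = L_phase_pow i m (\<lambda>y. lam ^ n * w y) x"
    by (rule pc_local[OF L_phase_pow_positive_contraction _ Suc.prems]) (rule Suc.IH)
  also have "\<dots> = lam ^ Suc n * w x"
    using w Suc.prems by (simp add: pc_scale[OF L_phase_pow_positive_contraction] eigenfunction_def)
  finally show ?case .
qed simp

lemma eigenfunction_lin:
  assumes "eigenfunction lam i f" "eigenfunction lam i g"
  shows "eigenfunction lam i (\<lambda>y. a * f y + b * g y)"
  unfolding eigenfunction_def
proof (intro conjI ballI)
  show "ucb_on X (\<lambda>y. a * f y + b * g y)" using assms ucb_on_lin by (auto simp: eigenfunction_def)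
  fix x assume x: "x \<in> X"
  then show "L_phase_pow i m (\<lambda>y. a * f y + b * g y) x = lam * (a * f x + b * g x)"
    using assms pc_linear[OF L_phase_pow_positive_contraction x]
    by (simp add: eigenfunction_def algebra_simps)
qed

lemma limit_eigenfunction:
  assumes lam: "0 < lam" and g: "ucb_on X g"
    and U: "uniform_limit X (\<lambda>n x. inverse (lam ^ n) * L_phase_pow i (n * m) g x) U sequentially"
  shows "eigenfunction lam i U"
proof -
  define F where "F = (\<lambda>n x. inverse (lam ^ n) * L_phase_pow i (n * m) g x)"
  have F: "uniform_limit X F U sequentially" unfolding F_def by (rule U)
  have "ucb_on X (F n)" for n
    unfolding F_def by (intro ucb_on_mult ucb_on_const pc_ucb_on[OF L_phase_pow_positive_contraction] g)
  then have "ucb_on X U" using ucb_on_uniform_limit F by blast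
  moreover have "L_phase_pow i m U x = lam * U x" if x: "x \<in> X" for x
  proof -
    have step: "L_phase_pow i m (F n) x = lam * F (Suc n) x" for n
      using pc_scale[OF L_phase_pow_positive_contraction x] L_phase_pow_block[of i n m g] lam
      by (simp add: F_def add.commute)
    have "(\<lambda>n. L_phase_pow i m (F n) x) \<longlonglongrightarrow> L_phase_pow i m U x"
      using tendsto_uniform_limitI[OF pc_uniform_limit[OF L_phase_pow_positive_contraction F] x] .
    moreover have "(\<lambda>n. L_phase_pow i m (F n) x) \<longlonglongrightarrow> lam * U x"
      unfolding step using tendsto_uniform_limitI[OF F x]
      by (intro tendsto_mult_left) (rule LIMSEQ_Suc)
    ultimately show ?thesis by (rule LIMSEQ_unique)
  qed
  ultimately show ?thesis by (simp add: eigenfunction_def)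
qed

lemma birkhoff_lower_bound:
  assumes "y \<in> X" "\<And>x. x \<in> X \<Longrightarrow> \<bar>\<phi> x\<bar> \<le> B"
  shows "- (real l * B) \<le> birkhoff l \<phi> y"
proof -
  have "(\<Sum>k<l. - B) \<le> birkhoff l \<phi> y"
    unfolding birkhoff_def using assms funpow_shift_Sigma_sub
    by (intro sum_mono) (metis abs_le_iff minus_le_iff)
  then show ?thesis by simp
qed

lemma eigenfunction_preimage_bound:
  assumes lam: "0 < lam" and i: "i < m" and w: "eigenfunction lam i w"
    and nn: "\<And>y. y \<in> Om i \<Longrightarrow> 0 \<le> w y"
  obtains c where "0 < c" "c \<le> 1"
    "\<And>n x y. x \<in> Om i \<Longrightarrow> y \<in> cyc_preimages i (n * m) x \<Longrightarrow> c ^ n * w y \<le> w x"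
proof -
  obtain B where B: "\<And>x. x \<in> X \<Longrightarrow> \<bar>\<phi> x\<bar> \<le> B" using ucb_on_bound[OF phi_ucb_on] by blast
  define c where "c = min 1 (exp (- (real m * B)) / lam)"
  have c: "0 < c" "c \<le> 1" using lam by (auto simp: c_def)
  have "c ^ n * w y \<le> w x" if x: "x \<in> Om i" and y: "y \<in> cyc_preimages i (n * m) x" for n x y
  proof -
    have xX: "x \<in> X" and yX: "y \<in> X" and wy: "0 \<le> w y"
      using x y Omega_sub_X nn[OF cyc_preimages_Omega[OF i x y]] by (auto simp: cyc_preimages_def)
    have "lam * c \<le> exp (- (real m * B))" using lam by (simp add: c_def min_def field_simps)
    then have "(lam * c) ^ n \<le> exp (- (real m * B)) ^ n" using lam c by (intro power_mono) auto
    moreover have "exp (- (real m * B)) ^ n = exp (- (real (n * m) * B))"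
      by (simp add: exp_of_nat_mult[symmetric] algebra_simps)
    ultimately have "lam ^ n * (c ^ n * w y) \<le> exp (- (real (n * m) * B)) * w y"
      using wy by (simp add: power_mult_distrib mult_right_mono flip: mult.assoc)
    also have "\<dots> \<le> exp (birkhoff (n * m) \<phi> y) * w y"
      using birkhoff_lower_bound[OF yX B, of "n * m"] wy by (intro mult_right_mono) auto
    also have "\<dots> \<le> (\<Sum>y'\<in>cyc_preimages i (n * m) x. exp (birkhoff (n * m) \<phi> y') * w y')"
      using nn cyc_preimages_Omega[OF i x] y
      by (intro member_le_sum finite_cyc_preimages) auto
    also have "\<dots> = lam ^ n * w x"
      using eigenfunction_iterate[OF w xX] L_phase_pow_sum[OF xX] by simp
    finally show ?thesis using lam by simp
  qed
  with c show ?thesis by (rule that)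
qed

lemma Omega_uniformly_reachable:
  assumes i: "i < m" and z: "z \<in> Om i" and N: "1 \<le> N"
  obtains K where
    "\<And>x. x \<in> Om i \<Longrightarrow> \<exists>n\<le>K. \<exists>y\<in>cyc_preimages i (n * m) x. \<forall>t<N. y t = z t"
proof -
  have "\<forall>b\<in>D i. \<exists>n. \<forall>x\<in>X. x 0 = b \<longrightarrow> (\<exists>y\<in>cyc_preimages i (n * m) x. \<forall>t<N. y t = z t)"
  proof
    fix b assume b: "b \<in> D i"
    obtain n where "\<And>x. x \<in> X \<Longrightarrow> x 0 = b \<Longrightarrow> \<exists>y\<in>cyc_preimages i (n * m) x. \<forall>t<N. y t = z t"
      using Omega_reachable[OF i z N b] by blast
    then show "\<exists>n. \<forall>x\<in>X. x 0 = b \<longrightarrow> (\<exists>y\<in>cyc_preimages i (n * m) x. \<forall>t<N. y t = z t)"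
      by blast
  qed
  then obtain nb where nb: "\<forall>b\<in>D i. \<forall>x\<in>X. x 0 = b \<longrightarrow>
      (\<exists>y\<in>cyc_preimages i (nb b * m) x. \<forall>t<N. y t = z t)"
    by (rule bchoice[THEN exE])
  have fin: "finite (D i)"
    using phase_sub_Delta[of i] Delta_sub i by (metis finite_atLeastAtMost finite_subset mod_less)
  show ?thesis
  proof (rule that[of "Max (nb ` D i)"])
    fix x assume x: "x \<in> Om i"
    then have "x 0 \<in> D i" "x \<in> X" using Omega_sub_X by (auto simp: Omega_def)
    then show "\<exists>n\<le>Max (nb ` D i). \<exists>y\<in>cyc_preimages i (n * m) x. \<forall>t<N. y t = z t"
      using nb fin by (intro exI[of _ "nb (x 0)"]) auto
  qed
qed

text \<open>A non-negative eigenfunction whose infimum on \<open>\<Omega>\<^sub>i\<close> is zero vanishes on \<open>\<Omega>\<^sub>i\<close>: if it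
  were positive at \<open>z\<close>, it would be bounded below near \<open>z\<close> and hence, by reachability and the
  preimage bound, on all of \<open>\<Omega>\<^sub>i\<close>.\<close>

lemma eigenfunction_vanishes_on_Omega:
  assumes lam: "0 < lam" and i: "i < m" and w: "eigenfunction lam i w"
    and nn: "\<And>y. y \<in> Om i \<Longrightarrow> 0 \<le> w y"
    and small: "\<And>e. 0 < e \<Longrightarrow> \<exists>x\<in>Om i. w x < e"
    and z: "z \<in> Om i"
  shows "w z = 0"
proof (rule ccontr)
  assume "w z \<noteq> 0"
  then have e: "0 < w z / 2" using nn[OF z] by simp
  have wu: "ucb_on X w" using w by (simp add: eigenfunction_def)
  obtain N where N: "\<And>x y. x \<in> X \<Longrightarrow> y \<in> X \<Longrightarrow> \<forall>t<N. x t = y t \<Longrightarrow> \<bar>w x - w y\<bar> \<le> w z / 2"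
    using ucb_on_cylinder[OF wu e] by blast
  have N1: "1 \<le> Suc N" by simp
  obtain K where K: "\<And>x. x \<in> Om i \<Longrightarrow> \<exists>n\<le>K. \<exists>y\<in>cyc_preimages i (n * m) x. \<forall>t<Suc N. y t = z t"
    using Omega_uniformly_reachable[OF i z N1] by blast
  obtain c where c: "0 < c" "c \<le> 1"
    and bound: "\<And>n x y. x \<in> Om i \<Longrightarrow> y \<in> cyc_preimages i (n * m) x \<Longrightarrow> c ^ n * w y \<le> w x"
    using eigenfunction_preimage_bound[OF lam i w nn] by blast
  obtain x where x: "x \<in> Om i" and wx: "w x < c ^ K * (w z / 2)"
    using small[of "c ^ K * (w z / 2)"] c e by auto
  obtain n y where n: "n \<le> K" and y: "y \<in> cyc_preimages i (n * m) x" and yz: "\<forall>t<Suc N. y t = z t"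
    using K[OF x] by blast
  have "y \<in> X" "z \<in> X" using y z Omega_sub_X by (auto simp: cyc_preimages_def)
  then have "\<bar>w y - w z\<bar> \<le> w z / 2" using N yz by simp
  then have "w z / 2 \<le> w y" by linarith
  then have "c ^ K * (w z / 2) \<le> c ^ n * w y"
    using c e n by (intro mult_mono power_decreasing) auto
  also have "\<dots> \<le> w x" by (rule bound[OF x y])
  finally show False using wx by simp
qed

text \<open>An eigenfunction vanishing on \<open>\<Omega>\<^sub>i\<close> vanishes on \<open>X\<close>, provided the normalised iterates
  of \<open>1\<close> stay bounded: every long cyclic preimage is close to \<open>\<Omega>\<^sub>i\<close>.\<close>

lemma eigenfunction_zero_extends:
  assumes lam: "0 < lam" and i: "i < m" and v: "eigenfunction lam i v"
    and zero: "\<And>y. y \<in> Om i \<Longrightarrow> v y = 0"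
    and x: "x \<in> X"
    and bounded: "Bseq (\<lambda>n. inverse (lam ^ n) * L_phase_pow i (n * m) (\<lambda>_. 1) x)"
  shows "v x = 0"
proof -
  obtain K where K: "0 < K" "\<And>n. \<bar>inverse (lam ^ n) * L_phase_pow i (n * m) (\<lambda>_. 1) x\<bar> \<le> K"
    using bounded by (auto elim: BseqE)
  have "\<bar>v x\<bar> \<le> 0 + e" if e: "0 < e" for e
  proof -
    obtain N where N: "\<And>x y. x \<in> X \<Longrightarrow> y \<in> X \<Longrightarrow> \<forall>t<N. x t = y t \<Longrightarrow> \<bar>v x - v y\<bar> \<le> e / K"
      using ucb_on_cylinder[of X v "e / K"] v e K by (auto simp: eigenfunction_def)
    define n where "n = Suc N"
    have "n \<le> n * m" using m_pos by simp
    then have nm: "N \<le> n * m" "1 \<le> n * m" unfolding n_def by linarith+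
    have vy: "\<bar>v y\<bar> \<le> e / K" if y: "y \<in> cyc_preimages i (n * m) x" for y
    proof -
      obtain z where "z \<in> Om i" "\<forall>t<n * m. z t = y t"
        using cyc_preimages_shadowed[OF i nm(2) y] by blast
      then show ?thesis using N[of y z] zero y nm Omega_sub_X by (auto simp: cyc_preimages_def)
    qed
    have "lam ^ n * \<bar>v x\<bar> = \<bar>\<Sum>y\<in>cyc_preimages i (n * m) x. exp (birkhoff (n * m) \<phi> y) * v y\<bar>"
      using eigenfunction_iterate[OF v x] L_phase_pow_sum[OF x] lam by (simp add: abs_mult)
    also have "\<dots> \<le> (\<Sum>y\<in>cyc_preimages i (n * m) x. exp (birkhoff (n * m) \<phi> y) * (e / K))"
    proof (rule order_trans[OF sum_abs sum_mono])
      fix y assume y: "y \<in> cyc_preimages i (n * m) x"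
      have "\<bar>exp (birkhoff (n * m) \<phi> y) * v y\<bar> = exp (birkhoff (n * m) \<phi> y) * \<bar>v y\<bar>"
        by (simp add: abs_mult)
      also have "\<dots> \<le> exp (birkhoff (n * m) \<phi> y) * (e / K)" using vy[OF y] by (intro mult_left_mono) auto
      finally show "\<bar>exp (birkhoff (n * m) \<phi> y) * v y\<bar> \<le> exp (birkhoff (n * m) \<phi> y) * (e / K)" .
    qed
    also have "\<dots> = e / K * L_phase_pow i (n * m) (\<lambda>_. 1) x"
      unfolding L_phase_pow_sum[OF x] sum_distrib_left by (auto intro!: sum.cong)
    also have "\<dots> \<le> e / K * (K * lam ^ n)"
      using K(2)[of n] lam e K(1) by (intro mult_left_mono) (auto simp: field_simps abs_le_iff)
    finally show ?thesis using lam K(1) by simp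
  qed
  then show ?thesis using field_le_epsilon[of "\<bar>v x\<bar>" 0] by simp
qed

lemma eigenfunction_bounded_below:
  assumes lam: "0 < lam" and i: "i < m" and h: "eigenfunction lam i h"
    and nn: "\<And>y. y \<in> Om i \<Longrightarrow> 0 \<le> h y" and ne: "\<exists>y\<in>Om i. h y \<noteq> 0"
  obtains \<delta> where "0 < \<delta>" "\<And>y. y \<in> Om i \<Longrightarrow> \<delta> \<le> h y"
proof -
  have "\<exists>\<delta>>0. \<forall>y\<in>Om i. \<delta> \<le> h y"
  proof (rule ccontr)
    assume "\<not> (\<exists>\<delta>>0. \<forall>y\<in>Om i. \<delta> \<le> h y)"
    then have "\<And>e. 0 < e \<Longrightarrow> \<exists>y\<in>Om i. h y < e" by (meson not_le)
    then have "\<forall>z\<in>Om i. h z = 0" using eigenfunction_vanishes_on_Omega[OF lam i h nn] by blast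
    then show False using ne by blast
  qed
  then obtain \<delta> where "0 < \<delta>" "\<forall>y\<in>Om i. \<delta> \<le> h y" by blast
  then show ?thesis by (intro that) auto
qed

text \<open>Uniqueness of the eigenfunction: with \<open>t = sup (u / h)\<close> over \<open>\<Omega>\<^sub>i\<close>, the eigenfunction
  \<open>t h - u\<close> is non-negative on \<open>\<Omega>\<^sub>i\<close> with infimum zero, so it vanishes on \<open>\<Omega>\<^sub>i\<close> and then
  on all of \<open>X\<close>.\<close>

lemma eigenfunction_unique:
  assumes lam: "0 < lam" and i: "i < m" and u: "eigenfunction lam i u" and h: "eigenfunction lam i h"
    and nn: "\<And>y. y \<in> Om i \<Longrightarrow> 0 \<le> h y" and ne: "\<exists>y\<in>Om i. h y \<noteq> 0"
    and bounded: "\<And>x. x \<in> X \<Longrightarrow> Bseq (\<lambda>n. inverse (lam ^ n) * L_phase_pow i (n * m) (\<lambda>_. 1) x)"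
  obtains t where "\<And>x. x \<in> X \<Longrightarrow> u x = t * h x"
proof -
  obtain \<delta> where \<delta>: "0 < \<delta>" and h\<delta>: "\<And>y. y \<in> Om i \<Longrightarrow> \<delta> \<le> h y"
    using eigenfunction_bounded_below[OF lam i h nn ne] by blast
  have "ucb_on X u" "ucb_on X h" using u h by (simp_all add: eigenfunction_def)
  then obtain Bu Bh where Bu: "\<And>x. x \<in> X \<Longrightarrow> \<bar>u x\<bar> \<le> Bu" and Bh: "\<And>x. x \<in> X \<Longrightarrow> \<bar>h x\<bar> \<le> Bh"
    using ucb_on_bound by metis
  have ne': "Om i \<noteq> {}" and hB: "\<And>y. y \<in> Om i \<Longrightarrow> h y \<le> Bh"
    and uB: "\<And>y. y \<in> Om i \<Longrightarrow> \<bar>u y\<bar> \<le> Bu"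
    using ne Bh Bu Omega_sub_X by (auto simp: abs_le_iff)
  obtain t where ut: "\<And>y. y \<in> Om i \<Longrightarrow> u y \<le> t * h y"
    and inf: "\<And>e. 0 < e \<Longrightarrow> \<exists>y\<in>Om i. t * h y - u y < e"
    using sup_of_ratios[where S = "Om i" and h = h and u = u, OF ne' \<delta> h\<delta> hB uB] by blast
  define w where "w y = t * h y + (-1) * u y" for y
  have weig: "eigenfunction lam i w" unfolding w_def by (rule eigenfunction_lin[OF h u])
  have "\<And>y. y \<in> Om i \<Longrightarrow> w y = 0"
    using eigenfunction_vanishes_on_Omega[OF lam i weig] ut inf by (simp add: w_def)
  then have "w x = 0" if "x \<in> X" for x
    using eigenfunction_zero_extends[OF lam i weig _ that bounded[OF that]] by blast
  then show ?thesis by (intro that[of t]) (simp add: w_def)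
qed

lemma LR_Delta_pow_limit:
  assumes k: "1 \<le> k"
    and H: "uniform_limit X (\<lambda>n x. inverse (lam ^ n) * L_phase_pow j (n * m) (\<lambda>_. 1) x) H sequentially"
  shows "uniform_limit X
           (\<lambda>n x. inverse (lam ^ n) * L_phase_pow ((j + k) mod m) (n * m) (L_phase_pow j k (\<lambda>_. 1)) x)
           ((LR \<Delta> ^^ k) H) sequentially"
proof -
  have T: "positive_contraction X (LR \<Delta> ^^ k)"
    by (rule positive_contraction_funpow[OF LR_positive_contraction])
  have iterates: "(LR \<Delta> ^^ k) (\<lambda>x. inverse (lam ^ n) * L_phase_pow j (n * m) (\<lambda>_. 1) x) x
      = inverse (lam ^ n) * L_phase_pow ((j + k) mod m) (n * m) (L_phase_pow j k (\<lambda>_. 1)) x"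
    if n: "1 \<le> n" and x: "x \<in> X" for n x
  proof -
    obtain l where l: "n * m = Suc l" using n m_pos by (metis Suc_pred nat_0_less_mult_iff less_le_trans zero_less_one)
    have "(LR \<Delta> ^^ k) (L_phase_pow j (n * m) (\<lambda>_. 1)) x = L_phase_pow j (k + n * m) (\<lambda>_. 1) x"
      using LR_Delta_pow_L_phase_pow[OF x, of k j l] by (simp add: l add.commute)
    also have "\<dots> = L_phase_pow ((j + k) mod m) (n * m) (L_phase_pow j k (\<lambda>_. 1)) x"
      by (simp add: L_phase_pow_add L_phase_pow_mod[of "j + k" "(j + k) mod m"])
    finally show ?thesis by (simp add: pc_scale[OF T x])
  qed
  have "\<forall>\<^sub>F n in sequentially. \<forall>x\<in>X.
      (LR \<Delta> ^^ k) (\<lambda>x. inverse (lam ^ n) * L_phase_pow j (n * m) (\<lambda>_. 1) x) x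
        = inverse (lam ^ n) * L_phase_pow ((j + k) mod m) (n * m) (L_phase_pow j k (\<lambda>_. 1)) x"
    using iterates unfolding eventually_sequentially by blast
  from uniform_limit_cong[OF this, where h = "(LR \<Delta> ^^ k) H" and i = "(LR \<Delta> ^^ k) H"]
  show ?thesis using pc_uniform_limit[OF T H] by simp
qed

end


section \<open>Conformal measures\<close>

text \<open>Nothing about \<open>P\<close> beyond this is used.\<close>

locale conformal_measures = cyclic_subsystem +
  fixes P :: real and \<nu> :: "nat \<Rightarrow> (nat \<Rightarrow> nat) measure"
  assumes conformal: "\<forall>j<m. prob_space (\<nu> j) \<and>
      sets (\<nu> j) = sets (restrict_space borel (Sigma_sub {1..L} A)) \<and>
      emeasure (\<nu> j) (Omega \<Delta> A D j) = 1 \<and>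
      (\<forall>\<psi>. continuous_on (Sigma_sub {1..L} A) \<psi> \<longrightarrow>
         (\<integral>x. transfer_m {1..L} A D m j \<phi> \<psi> x \<partial>\<nu> j) = exp (real m * P) * (\<integral>x. \<psi> x \<partial>\<nu> j))"
begin

definition lam :: real where
  "lam = exp (real m * P)"

lemma lam_pos: "0 < lam"
  by (simp add: lam_def)

context
  fixes i assumes i: "i < m"
begin

lemma nu_prob_space: "prob_space (\<nu> i)"
  using conformal i by blast

lemma nu_space: "space (\<nu> i) = X"
  using sets_eq_imp_space_eq[of "\<nu> i" "restrict_space borel X"] conformal i
  by (simp add: space_restrict_space)

lemma nu_measurable: "ucb_on X f \<Longrightarrow> f \<in> borel_measurable (\<nu> i)"
  using borel_measurable_continuous_on_restrict[OF ucb_on_continuous_on[of X f]]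
    measurable_cong_sets[of "\<nu> i" "restrict_space borel X"] conformal i by blast

lemma nu_integrable:
  assumes f: "ucb_on X f"
  shows "integrable (\<nu> i) f"
proof -
  interpret prob_space "\<nu> i" by (rule nu_prob_space)
  obtain B where "\<And>x. x \<in> X \<Longrightarrow> \<bar>f x\<bar> \<le> B" using ucb_on_bound[OF f] by blast
  then show ?thesis
    by (intro integrable_const_bound[where B = B]) (auto simp: nu_space nu_measurable[OF f])
qed

lemma nu_AE_Omega: "AE x in \<nu> i. x \<in> Om i"
proof -
  interpret prob_space "\<nu> i" by (rule nu_prob_space)
  have "prob (Om i) = 1" using conformal i by (simp add: measure_def)
  then show ?thesis by (rule AE_prob_1)
qed

lemma nu_conformal:
  assumes f: "ucb_on X f"
  shows "(\<integral>x. L_phase_pow i (n * m) f x \<partial>\<nu> i) = lam ^ n * (\<integral>x. f x \<partial>\<nu> i)"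
proof (induction n)
  case (Suc n)
  let ?g = "L_phase_pow i (n * m) f"
  have g: "ucb_on X ?g" by (rule pc_ucb_on[OF L_phase_pow_positive_contraction f])
  have "(\<integral>x. L_phase_pow i (Suc n * m) f x \<partial>\<nu> i) = (\<integral>x. transfer_m {1..L} A D m i \<phi> ?g x \<partial>\<nu> i)"
  proof (rule Bochner_Integration.integral_cong[OF refl])
    fix x assume "x \<in> space (\<nu> i)"
    then have x: "x \<in> X" by (simp add: nu_space)
    show "L_phase_pow i (Suc n * m) f x = transfer_m {1..L} A D m i \<phi> ?g x"
      unfolding transfer_m_eq_L_phase_pow[OF x] L_phase_pow_block[of i n m f, symmetric]
      by (simp add: add.commute)
  qed
  also have "\<dots> = lam * (\<integral>x. ?g x \<partial>\<nu> i)"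
    using conformal i ucb_on_continuous_on[OF g] by (simp add: lam_def)
  finally show ?case using Suc by simp
qed simp

lemma limit_integral:
  assumes g: "ucb_on X g"
    and U: "uniform_limit X (\<lambda>n x. inverse (lam ^ n) * L_phase_pow i (n * m) g x) U sequentially"
  shows "(\<integral>x. U x \<partial>\<nu> i) = (\<integral>x. g x \<partial>\<nu> i)"
proof -
  have F: "ucb_on X (\<lambda>x. inverse (lam ^ n) * L_phase_pow i (n * m) g x)" for n
    by (intro ucb_on_mult ucb_on_const pc_ucb_on[OF L_phase_pow_positive_contraction] g)
  have "ucb_on X U" using limit_eigenfunction[OF lam_pos g U] by (simp add: eigenfunction_def)
  then have "(\<lambda>n. \<integral>x. inverse (lam ^ n) * L_phase_pow i (n * m) g x \<partial>\<nu> i) \<longlonglongrightarrow> (\<integral>x. U x \<partial>\<nu> i)"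
    using U F by (intro integral_uniform_limit nu_prob_space nu_integrable) (simp_all add: nu_space)
  moreover have "(\<integral>x. inverse (lam ^ n) * L_phase_pow i (n * m) g x \<partial>\<nu> i) = (\<integral>x. g x \<partial>\<nu> i)" for n
    using nu_conformal[OF g, of n] lam_pos by simp
  ultimately show ?thesis by (simp add: LIMSEQ_const_iff)
qed

lemma limit_of_one_properties:
  assumes H: "uniform_limit X (\<lambda>n x. inverse (lam ^ n) * L_phase_pow i (n * m) (\<lambda>_. 1) x) H sequentially"
  shows "eigenfunction lam i H" and "(\<integral>x. H x \<partial>\<nu> i) = 1"
    and "\<And>x. x \<in> X \<Longrightarrow> 0 \<le> H x" and "\<exists>y\<in>Om i. H y \<noteq> 0"
    and "\<And>x. x \<in> X \<Longrightarrow> Bseq (\<lambda>n. inverse (lam ^ n) * L_phase_pow i (n * m) (\<lambda>_. 1) x)"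
proof -
  show eig: "eigenfunction lam i H" by (rule limit_eigenfunction[OF lam_pos ucb_on_const H])
  show int: "(\<integral>x. H x \<partial>\<nu> i) = 1"
    using limit_integral[OF ucb_on_const H] prob_space.prob_space[OF nu_prob_space] by simp
  fix x assume x: "x \<in> X"
  have lim: "(\<lambda>n. inverse (lam ^ n) * L_phase_pow i (n * m) (\<lambda>_. 1) x) \<longlonglongrightarrow> H x"
    using tendsto_uniform_limitI[OF H x] .
  then show "Bseq (\<lambda>n. inverse (lam ^ n) * L_phase_pow i (n * m) (\<lambda>_. 1) x)"
    by (rule convergent_imp_Bseq[OF convergentI])
  show "0 \<le> H x"
    using lim pc_nonneg[OF L_phase_pow_positive_contraction _ x, of "\<lambda>_. 1"] lam_pos
    by (intro LIMSEQ_le_const) auto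
next
  show "\<exists>y\<in>Om i. H y \<noteq> 0"
  proof (rule ccontr)
    assume "\<not> (\<exists>y\<in>Om i. H y \<noteq> 0)"
    then have "AE y in \<nu> i. H y = 0" using nu_AE_Omega by auto
    then have "(\<integral>y. H y \<partial>\<nu> i) = 0"
      using integral_cong_AE[of H "\<nu> i" "\<lambda>_. 0"] nu_measurable limit_eigenfunction[OF lam_pos ucb_on_const H]
      by (auto simp: eigenfunction_def)
    then show False
      using limit_integral[OF ucb_on_const H] prob_space.prob_space[OF nu_prob_space] by simp
  qed
qed

lemma limit_eq_integral_times_h:
  assumes H: "uniform_limit X (\<lambda>n x. inverse (lam ^ n) * L_phase_pow i (n * m) (\<lambda>_. 1) x) H sequentially"
    and g: "ucb_on X g"
    and U: "uniform_limit X (\<lambda>n x. inverse (lam ^ n) * L_phase_pow i (n * m) g x) U sequentially"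
    and x: "x \<in> X"
  shows "U x = (\<integral>y. g y \<partial>\<nu> i) * H x"
proof -
  obtain t where t: "\<And>y. y \<in> X \<Longrightarrow> U y = t * H y"
    using eigenfunction_unique[OF lam_pos i limit_eigenfunction[OF lam_pos g U] limit_of_one_properties(1)[OF H]]
      limit_of_one_properties(3-5)[OF H] Omega_sub_X by blast
  have "(\<integral>y. g y \<partial>\<nu> i) = (\<integral>y. t * H y \<partial>\<nu> i)"
    unfolding limit_integral[OF g U, symmetric] by (intro Bochner_Integration.integral_cong) (simp_all add: nu_space t)
  also have "\<dots> = t" using limit_of_one_properties(2)[OF H] by simp
  finally show ?thesis using t[OF x] by simp
qed

end

text \<open>On \<open>\<Omega>\<^sub>i\<close>, which carries \<open>\<nu>\<^sub>i\<close>, the functions \<open>L\<^sub>\<Delta>\<^sup>k 1\<close> and \<open>L_phase_pow j k 1\<close> agree.\<close>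

lemma integral_LR_Delta_pow_one:
  assumes k: "1 \<le> k"
  shows "(\<integral>y. L_phase_pow j k (\<lambda>_. 1) y \<partial>\<nu> ((j + k) mod m)) = (\<integral>y. (LR \<Delta> ^^ k) (\<lambda>_. 1) y \<partial>\<nu> ((j + k) mod m))"
proof -
  have i: "(j + k) mod m < m" using m_pos by simp
  have T: "positive_contraction X (LR \<Delta> ^^ k)"
    by (rule positive_contraction_funpow[OF LR_positive_contraction])
  show ?thesis
  proof (rule integral_cong_AE)
    show "L_phase_pow j k (\<lambda>_. 1) \<in> borel_measurable (\<nu> ((j + k) mod m))"
      by (intro nu_measurable[OF i] pc_ucb_on[OF L_phase_pow_positive_contraction] ucb_on_const)
    show "(LR \<Delta> ^^ k) (\<lambda>_. 1) \<in> borel_measurable (\<nu> ((j + k) mod m))"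
      by (intro nu_measurable[OF i] pc_ucb_on[OF T] ucb_on_const)
    show "AE y in \<nu> ((j + k) mod m). L_phase_pow j k (\<lambda>_. 1) y = (LR \<Delta> ^^ k) (\<lambda>_. 1) y"
      using nu_AE_Omega[OF i] by (rule AE_mp) (auto simp: Omega_def LR_Delta_pow_one[OF k])
  qed
qed

lemma normalised_iterates:
  "x \<in> X \<Longrightarrow> exp (- (real n * real m * P)) * (transfer_m {1..L} A D m j \<phi> ^^ n) (\<lambda>_. 1) x
     = inverse (lam ^ n) * L_phase_pow j (n * m) (\<lambda>_. 1) x"
  unfolding transfer_m_funpow lam_def by (simp add: exp_minus exp_of_nat_mult[symmetric] mult.assoc)

lemma LR_Delta_pow_h:
  assumes h: "\<forall>j<m. uniform_limit X
      (\<lambda>n x. inverse (lam ^ n) * L_phase_pow j (n * m) (\<lambda>_. 1) x) (h j) sequentially"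
    and j: "j < m" and k: "1 \<le> k" and x: "x \<in> X"
  shows "(LR \<Delta> ^^ k) (h j) x =
    (\<integral>y. (LR \<Delta> ^^ k) (\<lambda>_. 1) y \<partial>\<nu> ((j + k) mod m)) * h ((j + k) mod m) x"
proof -
  have i: "(j + k) mod m < m" using m_pos by simp
  have g: "ucb_on X (L_phase_pow j k (\<lambda>_. 1))"
    by (intro pc_ucb_on[OF L_phase_pow_positive_contraction] ucb_on_const)
  have hi: "uniform_limit X (\<lambda>n x. inverse (lam ^ n) * L_phase_pow ((j + k) mod m) (n * m) (\<lambda>_. 1) x)
      (h ((j + k) mod m)) sequentially"
    using h i by blast
  show ?thesis
    using limit_eq_integral_times_h[OF i hi g LR_Delta_pow_limit[OF k spec[OF h, THEN mp, OF j]] x]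
    by (simp add: integral_LR_Delta_pow_one[OF k])
qed

end


text \<open>Only the hypotheses on \<open>\<phi>\<close>, \<open>\<Delta>\<close>, \<open>D\<close>, \<open>h\<close> and \<open>\<nu>\<close> enter the argument; the
  aperiodicity of \<open>A\<close>, the value of the period and the formula for \<open>P\<close> are not needed.\<close>

theorem mainTheorem4:
  fixes L m :: nat and A :: "nat \<Rightarrow> nat \<Rightarrow> bool" and \<phi> :: "(nat \<Rightarrow> nat) \<Rightarrow> real"
    and \<Delta> :: "nat set" and D :: "nat \<Rightarrow> nat set" and P :: real
    and h :: "nat \<Rightarrow> (nat \<Rightarrow> nat) \<Rightarrow> real" and \<nu> :: "nat \<Rightarrow> (nat \<Rightarrow> nat) measure"
  assumes l: "L \<ge> 1"
    and irrA: "irreducible_on {1..L} A"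
    and aperA: "\<forall>i\<in>{1..L}. period {1..L} A i = 1"
    and holder: "holder_on (Sigma_sub {1..L} A) \<phi>"
    and normalised: "\<forall>x\<in>Sigma_sub {1..L} A. transfer {1..L} A \<phi> (\<lambda>_. 1) x = 1"
    and Delta_sub: "\<Delta> \<subset> {1..L}" and Delta_ne: "\<Delta> \<noteq> {}"
    and irrD: "irreducible_on \<Delta> A"
    and m: "m \<ge> 2"
    and perD: "\<forall>i\<in>\<Delta>. period \<Delta> A i = m"
    and cyc: "cyclic_decomposition \<Delta> A D m"
    and P: "P = pressure \<Delta> A \<phi>"
    and h: "\<forall>j<m. uniform_limit (Sigma_sub {1..L} A)
              (\<lambda>n x. exp (- (real n * real m * P)) *
                 ((transfer_m {1..L} A D m j \<phi> ^^ n) (\<lambda>_. 1)) x) (h j) sequentially"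
    and \<nu>: "\<forall>j<m. prob_space (\<nu> j) \<and>
              sets (\<nu> j) = sets (restrict_space borel (Sigma_sub {1..L} A)) \<and>
              emeasure (\<nu> j) (Omega \<Delta> A D j) = 1 \<and>
              (\<forall>\<psi>. continuous_on (Sigma_sub {1..L} A) \<psi> \<longrightarrow>
                 (\<integral>x. transfer_m {1..L} A D m j \<phi> \<psi> x \<partial>\<nu> j) =
                   exp (real m * P) * (\<integral>x. \<psi> x \<partial>\<nu> j))"
  shows "\<forall>j<m. \<forall>k\<ge>1. \<forall>x\<in>Sigma_sub {1..L} A.
           (transfer_Delta {1..L} A \<Delta> \<phi> ^^ k) (h j) x =
             (\<integral>y. (transfer_Delta {1..L} A \<Delta> \<phi> ^^ k) (\<lambda>_. 1) y \<partial>\<nu> ((j + k) mod m)) *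
             h ((j + k) mod m) x"
proof -
  interpret conformal_measures L A \<phi> m \<Delta> D P \<nu>
    using holder normalised Delta_sub irrD m cyc \<nu> by unfold_locales auto
  have "uniform_limit X (\<lambda>n x. inverse (lam ^ n) * L_phase_pow j (n * m) (\<lambda>_. 1) x) (h j) sequentially"
    if j: "j < m" for j
  proof -
    have "uniform_limit X (\<lambda>n x. exp (- (real n * real m * P)) *
        (transfer_m {1..L} A D m j \<phi> ^^ n) (\<lambda>_. 1) x) (h j) sequentially"
      using h j by blast
    then show ?thesis
      by (rule uniform_limit_cong'[THEN iffD1, rotated 2]) (use normalised_iterates in blast)+
  qed
  then show ?thesis
    unfolding transfer_Delta_eq_LR using LR_Delta_pow_h by blast
qed

end
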